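(* Let $A$ be a process with regulated trajectories and of bounded variation. Then for every $t\geq0$, $$A_t^2\leq A_0^2+\int_{]0,t]}(A_s+A_{s^+})\,dA^r_s+2\sum_{0\leq s<t}A_{s^+}\Delta^+A_s-\sum_{0<s\leq t}\Delta^+A_s\,\Delta^-A_s.$$
   Context: Regulated trajectory: path with left limits $A_{t^-}$ at each $t>0$ and right limits $A_{t^+}$ at each $t\geq0$. $\Delta^+A_t=A_{t^+}-A_t$, $\Delta^-A_t=A_t-A_{t^-}$. A bounded variation process decomposes as $A_t=A^c_t+\sum_{0<s\leq t}\Delta^-A_s+\sum_{0\leq s<t}\Delta^+A_s$ with $A^c$ continuous; $A^r_t=A^c_t+\sum_{0<s\leq t}\Delta^-A_s$ is its right-continuous part, and the integral is a Stieltjes integral. *)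

theory Defs
  imports "HOL-Analysis.Analysis"
begin

definition partition_sums :: "(real \<Rightarrow> real) \<Rightarrow> real \<Rightarrow> real \<Rightarrow> real set" where
  "partition_sums f a b =
     {(\<Sum>i<length xs - 1. \<bar>f (xs ! Suc i) - f (xs ! i)\<bar>) | xs.
        sorted xs \<and> xs \<noteq> [] \<and> hd xs = a \<and> last xs = b}"

definition bounded_variation_on :: "(real \<Rightarrow> real) \<Rightarrow> real \<Rightarrow> real \<Rightarrow> bool" where
  "bounded_variation_on f a b \<longleftrightarrow> a \<le> b \<and> bdd_above (partition_sums f a b)"

definition variation :: "(real \<Rightarrow> real) \<Rightarrow> real \<Rightarrow> real \<Rightarrow> real" where
  "variation f a b = Sup (partition_sums f a b)"

definition bv_path :: "(real \<Rightarrow> real) \<Rightarrow> bool" where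
  "bv_path f \<longleftrightarrow> (\<forall>t\<ge>0. bounded_variation_on f 0 t)"

definition regulated_path :: "(real \<Rightarrow> real) \<Rightarrow> bool" where
  "regulated_path f \<longleftrightarrow> (\<forall>t>0. \<exists>l. (f \<longlongrightarrow> l) (at_left t)) \<and>
                        (\<forall>t\<ge>0. \<exists>l. (f \<longlongrightarrow> l) (at_right t))"

definition right_lim :: "(real \<Rightarrow> real) \<Rightarrow> real \<Rightarrow> real" where
  "right_lim f s = Lim (at_right s) f"

definition left_lim :: "(real \<Rightarrow> real) \<Rightarrow> real \<Rightarrow> real" where
  "left_lim f s = Lim (at_left s) f"

text \<open>Right-continuous part A^r_t = A^c_t + sum_{0<s<=t} Delta^- A_s = A_t - sum_{0<=s<t} Delta^+ A_s.\<close>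
definition right_cont_part :: "(real \<Rightarrow> real) \<Rightarrow> real \<Rightarrow> real" where
  "right_cont_part f t = f t - infsum (\<lambda>s. right_lim f s - f s) {0..<t}"

text \<open>Lebesgue-Stieltjes integral over ]a,b] (with 0 <= a) of h against a right-continuous
  function g of locally bounded variation on [0,infinity), via the Jordan decomposition
  g - g 0 = V - W on [0,infinity), V the variation function of g on [0,s], both V and W
  extended by 0 to negative reals (so they are increasing and right-continuous on the reals).\<close>
definition stieltjes_Ioc :: "(real \<Rightarrow> real) \<Rightarrow> (real \<Rightarrow> real) \<Rightarrow> real \<Rightarrow> real \<Rightarrow> real" where
  "stieltjes_Ioc g h a b =
     (let V = (\<lambda>s. if s \<le> 0 then 0 else variation g 0 s);
          W = (\<lambda>s. if s \<le> 0 then 0 else variation g 0 s - (g s - g 0))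
      in (\<integral>x\<in>{a<..b}. h x \<partial>interval_measure V) - (\<integral>x\<in>{a<..b}. h x \<partial>interval_measure W))"

end

theory Submission
  imports Defs
begin

text \<open>
  Write \<open>A = A\<^sup>r + J\<close> with \<open>J t = (\<Sum>0 \<le> s < t. \<Delta>\<^sup>+A s)\<close>: the right jumps are absolutely
  summable because \<open>A\<close> has bounded variation, and \<open>A\<^sup>r\<close> is right-continuous of bounded variation
  with left jumps \<open>\<Delta>\<^sup>-A\<close>. The Stieltjes measure \<open>dA\<^sup>r\<close> has an atom \<open>\<Delta>\<^sup>-A s\<close> at each \<open>s\<close>, so
  \<open>\<integral>]0,t] (A\<^sup>r s - A\<^sup>r s-) dA\<^sup>r = \<Sum>(\<Delta>\<^sup>-A)\<^sup>2\<close>, while Riemann sums along dyadic partitions telescope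
  to \<open>\<integral>]0,t] (A\<^sup>r s + A\<^sup>r s-) dA\<^sup>r = (A\<^sup>r t)\<^sup>2 - (A\<^sup>r 0)\<^sup>2\<close>. Integrating \<open>J\<close> and the right jumps
  against \<open>dA\<^sup>r\<close> and expanding \<open>(J t)\<^sup>2 = (\<Sum>u. \<Delta>\<^sup>+A u (2 J u + \<Delta>\<^sup>+A u))\<close> then shows that
  the right-hand side equals \<open>(A t)\<^sup>2 + \<Sum>(\<Delta>\<^sup>-A)\<^sup>2 + \<Sum>(\<Delta>\<^sup>+A)\<^sup>2\<close>.
\<close>

section \<open>Variation along partitions\<close>

fun partition_variation :: "(real \<Rightarrow> real) \<Rightarrow> real list \<Rightarrow> real" where
  "partition_variation f (x # y # zs) = \<bar>f y - f x\<bar> + partition_variation f (y # zs)"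
| "partition_variation f _ = 0"

lemma partition_sums_altdef:
  "partition_sums f a b =
     {partition_variation f xs | xs. sorted xs \<and> xs \<noteq> [] \<and> hd xs = a \<and> last xs = b}"
proof -
  have "(\<Sum>i<length xs - 1. \<bar>f (xs ! Suc i) - f (xs ! i)\<bar>) = partition_variation f xs" for xs
  proof (induction f xs rule: partition_variation.induct)
    case (1 f x y zs)
    have "(\<Sum>i<length (x # y # zs) - 1. \<bar>f ((x # y # zs) ! Suc i) - f ((x # y # zs) ! i)\<bar>)
       = \<bar>f y - f x\<bar> + (\<Sum>i<length (y # zs) - 1. \<bar>f ((y # zs) ! Suc i) - f ((y # zs) ! i)\<bar>)"
      by (simp add: sum.lessThan_Suc_shift del: sum.lessThan_Suc)
    then show ?case using 1 by simp
  qed auto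
  then show ?thesis unfolding partition_sums_def by simp
qed

lemma partition_variation_append:
  "xs \<noteq> [] \<Longrightarrow> ys \<noteq> [] \<Longrightarrow> last xs = hd ys \<Longrightarrow>
     partition_variation f (xs @ tl ys) = partition_variation f xs + partition_variation f ys"
proof (induction xs rule: induct_list012)
  case (2 x)
  then show ?case by (cases ys; cases "tl ys") auto
qed simp_all

lemma sorted_le_last: "sorted xs \<Longrightarrow> x \<in> set xs \<Longrightarrow> x \<le> last xs"
  by (induction xs) (auto simp: last_in_set)

lemma sorted_hd_le: "sorted xs \<Longrightarrow> x \<in> set xs \<Longrightarrow> hd xs \<le> x"
  by (cases xs) auto

lemma partition_variation_split:
  assumes "sorted xs" "xs \<noteq> []" "hd xs \<le> b" "b \<le> last xs"
  obtains ys zs where "sorted ys" "ys \<noteq> []" "hd ys = hd xs" "last ys = b"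
    "sorted zs" "zs \<noteq> []" "hd zs = b" "last zs = last xs"
    "partition_variation f xs \<le> partition_variation f ys + partition_variation f zs"
proof -
  have "\<exists>ys zs. sorted ys \<and> ys \<noteq> [] \<and> hd ys = hd xs \<and> last ys = b \<and>
     sorted zs \<and> zs \<noteq> [] \<and> hd zs = b \<and> last zs = last xs \<and>
     partition_variation f xs \<le> partition_variation f ys + partition_variation f zs"
    using assms
  proof (induction xs rule: induct_list012)
    case (2 x)
    then show ?case by (intro exI[of _ "[b]"]) simp
  next
    case (3 x y rest)
    show ?case
    proof (cases "b \<le> y")
      case True
      have "\<bar>f y - f x\<bar> \<le> \<bar>f b - f x\<bar> + \<bar>f y - f b\<bar>" by linarith
      then show ?thesis using 3(3,5) True
        by (intro exI[of _ "[x, b]"] exI[of _ "b # y # rest"]) auto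
    next
      case False
      then obtain ys zs where IH: "sorted ys" "ys \<noteq> []" "hd ys = y" "last ys = b"
        "sorted zs" "zs \<noteq> []" "hd zs = b" "last zs = last (y # rest)"
        "partition_variation f (y # rest) \<le> partition_variation f ys + partition_variation f zs"
        using 3(2) 3(3-6) by (auto simp: sorted2_simps)
      then obtain ys' where ys': "ys = y # ys'" by (cases ys) auto
      show ?thesis using 3(3) IH ys'
        by (intro exI[of _ "x # ys"] exI[of _ zs]) auto
    qed
  qed simp
  then show ?thesis using that by blast
qed

lemma partition_variation_le_telescope:
  assumes "sorted xs" "xs \<noteq> []" "set xs \<subseteq> {a..b}"
    "\<And>x y. a \<le> x \<Longrightarrow> x \<le> y \<Longrightarrow> y \<le> b \<Longrightarrow> \<bar>f y - f x\<bar> \<le> \<psi> y - \<psi> x"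
  shows "partition_variation f xs \<le> \<psi> (last xs) - \<psi> (hd xs)"
  using assms(1-3)
proof (induction xs rule: induct_list012)
  case (3 x y zs)
  have "\<bar>f y - f x\<bar> \<le> \<psi> y - \<psi> x" using 3(3,5) by (intro assms(4)) auto
  then show ?case using 3 by auto
qed auto

lemma partition_variation_first_step:
  assumes "sorted (s # rest)" "rest \<noteq> []" "s < last rest"
  obtains y zs where "s < y" "sorted zs" "zs \<noteq> []" "hd zs = y" "last zs = last rest"
    "partition_variation f (s # rest) = \<bar>f y - f s\<bar> + partition_variation f zs"
proof -
  have "\<exists>y zs. s < y \<and> sorted zs \<and> zs \<noteq> [] \<and> hd zs = y \<and> last zs = last rest \<and>
     partition_variation f (s # rest) = \<bar>f y - f s\<bar> + partition_variation f zs"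
    using assms
  proof (induction rest)
    case (Cons x rest)
    show ?case
    proof (cases "x = s")
      case True
      then obtain r rr where "rest = r # rr" using Cons by (cases rest) auto
      then show ?thesis using Cons True by auto
    next
      case False
      then show ?thesis using Cons.prems(1)
        by (intro exI[of _ x] exI[of _ "x # rest"]) auto
    qed
  qed simp
  then show ?thesis using that by blast
qed

lemma abs_diff_in_partition_sums: "a \<le> b \<Longrightarrow> \<bar>f b - f a\<bar> \<in> partition_sums f a b"
  unfolding partition_sums_altdef by (rule CollectI, rule exI[of _ "[a, b]"]) auto

lemma abs_diff_le_variation:
  "bounded_variation_on f a b \<Longrightarrow> \<bar>f b - f a\<bar> \<le> variation f a b"
  unfolding bounded_variation_on_def variation_def
  by (auto intro: cSup_upper abs_diff_in_partition_sums)

lemma variation_nonneg: "bounded_variation_on f a b \<Longrightarrow> 0 \<le> variation f a b"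
  using abs_diff_le_variation[of f a b] by linarith

lemma partition_variation_le_variation:
  assumes "bounded_variation_on f a b" "sorted xs" "xs \<noteq> []" "hd xs = a" "last xs = b"
  shows "partition_variation f xs \<le> variation f a b"
  using assms unfolding bounded_variation_on_def variation_def partition_sums_altdef
  by (intro cSup_upper) auto

lemma bounded_variation_onI:
  assumes "a \<le> b" "\<And>xs. sorted xs \<Longrightarrow> xs \<noteq> [] \<Longrightarrow> hd xs = a \<Longrightarrow> last xs = b \<Longrightarrow>
    partition_variation f xs \<le> C"
  shows "bounded_variation_on f a b" "variation f a b \<le> C"
proof -
  show "bounded_variation_on f a b"
    unfolding bounded_variation_on_def partition_sums_altdef bdd_above_def using assms by blast
  show "variation f a b \<le> C"
    unfolding variation_def using abs_diff_in_partition_sums[OF assms(1)] assms(2)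
    by (intro cSup_least) (auto simp: partition_sums_altdef)
qed

text \<open>Concatenating partitions of \<open>[a,b]\<close> and \<open>[b,c]\<close> gives a partition of \<open>[a,c]\<close>.\<close>
lemma bounded_variation_on_split:
  assumes "bounded_variation_on f a c" "a \<le> b" "b \<le> c"
  shows "bounded_variation_on f a b" "bounded_variation_on f b c"
    "variation f a b + variation f b c \<le> variation f a c"
proof -
  have concat: "partition_variation f xs + partition_variation f ys \<le> variation f a c"
    if "sorted xs" "xs \<noteq> []" "hd xs = a" "last xs = b"
       "sorted ys" "ys \<noteq> []" "hd ys = b" "last ys = c" for xs ys
  proof -
    have "\<forall>x\<in>set xs. x \<le> b" using that(1-4) sorted_le_last by blast
    moreover have "\<forall>y\<in>set (tl ys). b \<le> y"
      using that(5-7) sorted_hd_le by (metis list.set_sel(2) tl_Nil)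
    ultimately have "sorted (xs @ tl ys)"
      using that(1,5) by (auto simp: sorted_append sorted_tl intro: order.trans)
    moreover have "last (xs @ tl ys) = c"
      using that(2,4,6-8) by (cases ys; cases "tl ys") auto
    ultimately show ?thesis
      using partition_variation_le_variation[OF assms(1), of "xs @ tl ys"]
        partition_variation_append[of xs ys f] that by simp
  qed
  show "bounded_variation_on f a b"
    using concat[of _ "[b, c]"] assms(2,3)
    by (intro bounded_variation_onI(1)[where C="variation f a c - \<bar>f c - f b\<bar>"]) fastforce+
  show "bounded_variation_on f b c"
    using concat[of "[a, b]"] assms(2,3)
    by (intro bounded_variation_onI(1)[where C="variation f a c - \<bar>f b - f a\<bar>"]) fastforce+
  have "partition_variation f ys \<le> variation f a c - variation f a b"
    if "sorted ys" "ys \<noteq> []" "hd ys = b" "last ys = c" for ys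
  proof -
    have "variation f a b \<le> variation f a c - partition_variation f ys"
      using concat[OF _ _ _ _ that] by (intro bounded_variation_onI(2)[OF assms(2)]) fastforce
    then show ?thesis by linarith
  qed
  then have "variation f b c \<le> variation f a c - variation f a b"
    by (intro bounded_variation_onI(2)[OF assms(3)])
  then show "variation f a b + variation f b c \<le> variation f a c" by linarith
qed

lemma variation_same:
  assumes "bounded_variation_on f a a"
  shows "variation f a a = 0"
  using bounded_variation_on_split(3)[OF assms order_refl order_refl] variation_nonneg[OF assms]
  by linarith

lemma bounded_variation_on_join:
  assumes "bounded_variation_on f a b" "bounded_variation_on f b c"
  shows "bounded_variation_on f a c" "variation f a c \<le> variation f a b + variation f b c"
proof -
  have ab: "a \<le> b" "b \<le> c" using assms unfolding bounded_variation_on_def by auto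
  have "partition_variation f xs \<le> variation f a b + variation f b c"
    if xs: "sorted xs" "xs \<noteq> []" "hd xs = a" "last xs = c" for xs
  proof -
    obtain ys zs where "sorted ys" "ys \<noteq> []" "hd ys = a" "last ys = b"
      "sorted zs" "zs \<noteq> []" "hd zs = b" "last zs = c"
      "partition_variation f xs \<le> partition_variation f ys + partition_variation f zs"
      using partition_variation_split[OF xs(1,2), of b f] xs ab by auto
    then show ?thesis
      using partition_variation_le_variation[OF assms(1), of ys]
        partition_variation_le_variation[OF assms(2), of zs] by auto
  qed
  then show "bounded_variation_on f a c" "variation f a c \<le> variation f a b + variation f b c"
    using bounded_variation_onI[of a c] ab by auto
qed

lemma variation_additive:
  assumes "bounded_variation_on f a c" "a \<le> b" "b \<le> c"
  shows "variation f a c = variation f a b + variation f b c"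
  using bounded_variation_on_split[OF assms] bounded_variation_on_join(2)[of f a b c]
  by (simp add: order_antisym)

lemma bounded_variation_on_telescope:
  assumes "a \<le> b" "\<And>x y. a \<le> x \<Longrightarrow> x \<le> y \<Longrightarrow> y \<le> b \<Longrightarrow> \<bar>f y - f x\<bar> \<le> \<psi> y - \<psi> x"
  shows "bounded_variation_on f a b" "variation f a b \<le> \<psi> b - \<psi> a"
proof -
  have "partition_variation f xs \<le> \<psi> b - \<psi> a"
    if "sorted xs" "xs \<noteq> []" "hd xs = a" "last xs = b" for xs
  proof -
    have "set xs \<subseteq> {a..b}"
      using that sorted_le_last[of xs] sorted_hd_le[of xs] by fastforce
    then show ?thesis using partition_variation_le_telescope[OF that(1,2) _ assms(2)] that by auto
  qed
  then show "bounded_variation_on f a b" "variation f a b \<le> \<psi> b - \<psi> a"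
    using bounded_variation_onI[OF assms(1)] by auto
qed

text \<open>A near-optimal partition of \<open>[s,s']\<close> has a first step \<open>[s,y]\<close> of increment at most \<open>\<epsilon>\<close>,
  so the variation on \<open>[s,y]\<close> is at most \<open>\<epsilon>\<close> plus that increment.\<close>
lemma exists_small_variation_right:
  assumes "bounded_variation_on f s s'" "s < s'" "\<epsilon> > 0"
    "\<And>y. s < y \<Longrightarrow> y \<le> s' \<Longrightarrow> \<bar>f y - f s\<bar> \<le> \<epsilon>"
  obtains y where "s < y" "y \<le> s'" "variation f s y \<le> 2 * \<epsilon>"
proof -
  have "partition_sums f s s' \<noteq> {}"
    using abs_diff_in_partition_sums[of s s' f] assms(2) by auto
  moreover have "bdd_above (partition_sums f s s')"
    using assms(1) unfolding bounded_variation_on_def by auto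
  moreover have "variation f s s' - \<epsilon> < Sup (partition_sums f s s')"
    using assms(3) unfolding variation_def by simp
  ultimately obtain p where "p \<in> partition_sums f s s'" "variation f s s' - \<epsilon> < p"
    using less_cSup_iff by blast
  then obtain xs where xs: "sorted xs" "xs \<noteq> []" "hd xs = s" "last xs = s'"
    "variation f s s' - \<epsilon> < partition_variation f xs"
    unfolding partition_sums_altdef by auto
  then obtain rest where rest: "xs = s # rest" by (cases xs) auto
  then have "rest \<noteq> []" "last rest = s'" using xs assms(2) by auto
  then obtain y zs where yz: "s < y" "sorted zs" "zs \<noteq> []" "hd zs = y" "last zs = s'"
    "partition_variation f xs = \<bar>f y - f s\<bar> + partition_variation f zs"
    using partition_variation_first_step[of s rest f] xs(1) rest assms(2) by auto
  have "y \<le> s'" using yz(2-5) sorted_le_last[of zs y] hd_in_set[of zs] by simp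
  have split: "bounded_variation_on f y s'" "variation f s y + variation f y s' \<le> variation f s s'"
    using bounded_variation_on_split[OF assms(1), of y] yz(1) \<open>y \<le> s'\<close> by auto
  have "partition_variation f zs \<le> variation f y s'"
    using partition_variation_le_variation[OF split(1) yz(2-5)] .
  moreover have "\<bar>f y - f s\<bar> \<le> \<epsilon>" using assms(4) yz(1) \<open>y \<le> s'\<close> by auto
  ultimately have "variation f s y \<le> 2 * \<epsilon>" using split(2) xs(5) yz(6) by linarith
  then show ?thesis using that yz(1) \<open>y \<le> s'\<close> by auto
qed

lemma sum_disjoint_increments_le_variation:
  fixes l h :: "real \<Rightarrow> real"
  assumes "finite F" "bounded_variation_on f a b"
    "\<forall>u\<in>F. a \<le> l u \<and> l u \<le> h u \<and> h u \<le> b"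
    "\<forall>u\<in>F. \<forall>v\<in>F. u < v \<longrightarrow> h u \<le> l v"
  shows "(\<Sum>u\<in>F. \<bar>f (h u) - f (l u)\<bar>) \<le> variation f a b"
  using assms
proof (induction F arbitrary: b rule: finite_linorder_max_induct)
  case empty
  then show ?case using variation_nonneg by simp
next
  case (insert c F)
  have c: "a \<le> l c" "l c \<le> h c" "h c \<le> b" using insert(5) by auto
  have s1: "bounded_variation_on f a (l c)" "bounded_variation_on f (l c) b"
    "variation f a (l c) + variation f (l c) b \<le> variation f a b"
    using bounded_variation_on_split[OF insert(4) c(1)] c by auto
  have s2: "bounded_variation_on f (l c) (h c)" "bounded_variation_on f (h c) b"
    "variation f (l c) (h c) + variation f (h c) b \<le> variation f (l c) b"
    using bounded_variation_on_split[OF s1(2) c(2,3)] by auto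
  have "(\<Sum>u\<in>F. \<bar>f (h u) - f (l u)\<bar>) \<le> variation f a (l c)"
    using insert(2,5,6) by (intro insert(3)[OF s1(1)]) fastforce+
  moreover have "\<bar>f (h c) - f (l c)\<bar> \<le> variation f (l c) (h c)"
    using abs_diff_le_variation[OF s2(1)] .
  moreover have "c \<notin> F" using insert(2) by auto
  moreover have "0 \<le> variation f (h c) b" using variation_nonneg[OF s2(2)] .
  ultimately show ?case using insert(1) s1(3) s2(3) by simp
qed

lemma bv_path_bounded_variation_on:
  "bv_path f \<Longrightarrow> 0 \<le> a \<Longrightarrow> a \<le> b \<Longrightarrow> bounded_variation_on f a b"
  unfolding bv_path_def using bounded_variation_on_split(2)[of f 0 b a] by auto

lemma bv_path_variation_0:
  "bv_path f \<Longrightarrow> variation f 0 0 = 0"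
  using variation_same bv_path_bounded_variation_on[of f 0 0] by simp

lemma bv_path_variation_diff:
  assumes "bv_path f" "0 \<le> a" "a \<le> b"
  shows "variation f a b = variation f 0 b - variation f 0 a"
  using variation_additive[of f 0 b a] assms bv_path_bounded_variation_on[of f 0 b] by simp

lemma bv_path_abs_diff_le:
  assumes "bv_path f" "0 \<le> a" "a \<le> b"
  shows "\<bar>f b - f a\<bar> \<le> variation f 0 b - variation f 0 a"
  using abs_diff_le_variation[OF bv_path_bounded_variation_on[OF assms]]
    bv_path_variation_diff[OF assms] by simp

lemma bv_path_bounded:
  assumes "bv_path f" "0 \<le> x" "x \<le> t"
  shows "\<bar>f x\<bar> \<le> \<bar>f 0\<bar> + variation f 0 t"
  using bv_path_abs_diff_le[OF assms(1), of 0 x] bv_path_abs_diff_le[OF assms(1), of x t]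
    variation_nonneg[OF bv_path_bounded_variation_on[OF assms(1), of 0 0]] assms(2,3)
  by linarith

section \<open>Absolutely summable families of reals\<close>

lemma infsum_diff:
  fixes f g :: "'a \<Rightarrow> 'b::{topological_ab_group_add,t2_space}"
  assumes "f summable_on A" "g summable_on A"
  shows "infsum (\<lambda>x. f x - g x) A = infsum f A - infsum g A"
  using infsum_add[OF assms(1) summable_on_uminus[THEN iffD2, OF assms(2)]]
  by (simp add: infsum_uminus)

lemma infsum_Diff_finite:
  fixes f :: "'a \<Rightarrow> real"
  assumes "f summable_on S" "finite F" "F \<subseteq> S"
  shows "infsum f (S - F) = infsum f S - sum f F"
  using infsum_Diff[OF assms(1) _ assms(3)] assms(2) by simp

lemma summable_on_small_abs_tail:
  fixes f :: "'a \<Rightarrow> real"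
  assumes "f summable_on S" "\<epsilon> > 0" "0 \<le> C"
  obtains F where "finite F" "F \<subseteq> S" "infsum (\<lambda>x. \<bar>f x\<bar>) (S - F) \<le> \<epsilon>"
    "infsum (\<lambda>x. \<bar>f x\<bar>) (S - F) * C \<le> \<epsilon>"
proof -
  have abs: "(\<lambda>x. \<bar>f x\<bar>) summable_on S"
    using assms(1) summable_on_iff_abs_summable_on_real[of f S] by simp
  obtain F where F: "finite F" "F \<subseteq> S"
    "dist (sum (\<lambda>x. \<bar>f x\<bar>) F) (infsum (\<lambda>x. \<bar>f x\<bar>) S) \<le> \<epsilon> / (C + 1)"
    using infsum_finite_approximation[OF abs, of "\<epsilon> / (C + 1)"] assms(2,3) by auto
  define \<tau> where "\<tau> = infsum (\<lambda>x. \<bar>f x\<bar>) (S - F)"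
  have "\<tau> \<le> \<epsilon> / (C + 1)"
    using infsum_Diff_finite[OF abs F(1,2)] F(3) unfolding \<tau>_def by (auto simp: dist_real_def abs_le_iff)
  moreover have "0 \<le> \<tau>" unfolding \<tau>_def by (rule infsum_nonneg) simp
  ultimately have "\<tau> * (C + 1) \<le> \<epsilon>" using assms(3) by (simp add: field_simps)
  moreover have "\<tau> \<le> \<tau> * (C + 1)" "\<tau> * C \<le> \<tau> * (C + 1)"
    using mult_left_mono[of 1 "C + 1" \<tau>] mult_left_mono[of C "C + 1" \<tau>] \<open>0 \<le> \<tau>\<close> assms(3) by simp_all
  ultimately have "\<tau> \<le> \<epsilon>" "\<tau> * C \<le> \<epsilon>" by linarith+
  then show ?thesis using that F(1,2) unfolding \<tau>_def by blast
qed

lemma abs_infsum_le_infsum_abs: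
  fixes f :: "'a \<Rightarrow> real"
  assumes "f summable_on S" "A \<subseteq> S"
  shows "\<bar>infsum f A\<bar> \<le> infsum (\<lambda>x. \<bar>f x\<bar>) S"
proof -
  have S: "(\<lambda>x. \<bar>f x\<bar>) summable_on S"
    using assms(1) summable_on_iff_abs_summable_on_real[of f S] by simp
  then have A: "(\<lambda>x. \<bar>f x\<bar>) summable_on A" using assms(2) summable_on_subset_banach by blast
  have "\<bar>infsum f A\<bar> \<le> infsum (\<lambda>x. \<bar>f x\<bar>) A" using norm_infsum_bound[of f A] A by simp
  also have "\<dots> \<le> infsum (\<lambda>x. \<bar>f x\<bar>) S" using S A assms(2) by (intro infsum_mono2) auto
  finally show ?thesis .
qed

lemma abs_sum_le_infsum_abs:
  fixes f :: "'a \<Rightarrow> real"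
  assumes "(\<lambda>x. \<bar>f x\<bar>) summable_on S" "finite A" "A \<subseteq> S"
  shows "\<bar>sum f A\<bar> \<le> infsum (\<lambda>x. \<bar>f x\<bar>) S"
proof -
  have "\<bar>sum f A\<bar> \<le> infsum (\<lambda>x. \<bar>f x\<bar>) A" using sum_abs[of f A] assms(2) by simp
  also have "\<dots> \<le> infsum (\<lambda>x. \<bar>f x\<bar>) S" using assms by (intro infsum_mono2) auto
  finally show ?thesis .
qed

lemma abs_le_infsum_abs:
  fixes f :: "'a \<Rightarrow> real"
  assumes "(\<lambda>x. \<bar>f x\<bar>) summable_on S" "x \<in> S"
  shows "\<bar>f x\<bar> \<le> infsum (\<lambda>x. \<bar>f x\<bar>) S"
  using abs_sum_le_infsum_abs[OF assms(1), of "{x}"] assms(2) by simp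

lemma summable_on_mult_bounded:
  fixes f c :: "'a \<Rightarrow> real"
  assumes "f summable_on A" "\<And>x. x \<in> A \<Longrightarrow> \<bar>c x\<bar> \<le> K"
  shows "(\<lambda>x. f x * c x) summable_on A"
proof -
  have "(\<lambda>x. norm (f x * K)) summable_on A"
    using summable_on_cmult_left[OF assms(1), of K]
      summable_on_iff_abs_summable_on_real[of "\<lambda>x. f x * K" A] by simp
  moreover have "norm (f x * c x) \<le> norm (f x * K)" if "x \<in> A" for x
    using assms(2)[OF that] by (auto simp: abs_mult intro: mult_left_mono)
  ultimately have "(\<lambda>x. norm (f x * c x)) summable_on A"
    by (rule Infinite_Sum.abs_summable_on_comparison_test)
  then show ?thesis using summable_on_iff_abs_summable_on_real[of "\<lambda>x. f x * c x" A] by simp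
qed

lemma infsum_mult_bounded_minus_sum:
  fixes f c :: "'a \<Rightarrow> real"
  assumes "f summable_on S" "finite A" "A \<subseteq> S" "\<And>x. x \<in> S \<Longrightarrow> \<bar>c x\<bar> \<le> C"
  shows "\<bar>infsum (\<lambda>x. f x * c x) S - (\<Sum>x\<in>A. f x * c x)\<bar> \<le> infsum (\<lambda>x. \<bar>f x\<bar>) (S - A) * C"
proof -
  have fc: "(\<lambda>x. f x * c x) summable_on S" using summable_on_mult_bounded[OF assms(1,4)] .
  have f: "(\<lambda>x. \<bar>f x\<bar>) summable_on S - A"
    using assms(1) summable_on_iff_abs_summable_on_real[of f S]
      summable_on_subset_banach[of "\<lambda>x. \<bar>f x\<bar>" S "S - A"] by auto
  have "\<bar>infsum (\<lambda>x. f x * c x) S - (\<Sum>x\<in>A. f x * c x)\<bar> = \<bar>infsum (\<lambda>x. f x * c x) (S - A)\<bar>"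
    using infsum_Diff_finite[OF fc assms(2,3)] by simp
  also have "\<dots> \<le> infsum (\<lambda>x. \<bar>f x * c x\<bar>) (S - A)"
    by (rule abs_infsum_le_infsum_abs[OF summable_on_subset_banach[OF fc Diff_subset] order_refl])
  also have "\<dots> \<le> infsum (\<lambda>x. \<bar>f x\<bar> * C) (S - A)"
  proof (rule infsum_mono)
    show "(\<lambda>x. \<bar>f x * c x\<bar>) summable_on S - A"
      using summable_on_subset_banach[OF fc Diff_subset]
        summable_on_iff_abs_summable_on_real[of "\<lambda>x. f x * c x" "S - A"] by simp
    show "(\<lambda>x. \<bar>f x\<bar> * C) summable_on S - A" using summable_on_cmult_left[OF f] .
    show "\<bar>f x * c x\<bar> \<le> \<bar>f x\<bar> * C" if "x \<in> S - A" for x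
      using assms(4)[of x] that by (simp add: abs_mult mult_left_mono)
  qed
  also have "\<dots> = infsum (\<lambda>x. \<bar>f x\<bar>) (S - A) * C" using f by (intro infsum_cmult_left) auto
  finally show ?thesis .
qed

lemma tendsto_infsum_escaping_sets:
  fixes f :: "'a \<Rightarrow> real"
  assumes "f summable_on S" "\<And>y. A y \<subseteq> S" "\<And>x. x \<in> S \<Longrightarrow> eventually (\<lambda>y. x \<notin> A y) G"
  shows "((\<lambda>y. infsum f (A y)) \<longlongrightarrow> 0) G"
proof (rule tendstoI)
  fix \<epsilon> :: real assume "\<epsilon> > 0"
  obtain F where F: "finite F" "F \<subseteq> S" "infsum (\<lambda>x. \<bar>f x\<bar>) (S - F) \<le> \<epsilon> / 2"
    using summable_on_small_abs_tail[OF assms(1), of "\<epsilon> / 2" 0] \<open>\<epsilon> > 0\<close> by auto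
  have "eventually (\<lambda>y. \<forall>x\<in>F. x \<notin> A y) G"
    using F(1,2) assms(3) by (intro eventually_ball_finite) auto
  then show "eventually (\<lambda>y. dist (infsum f (A y)) 0 < \<epsilon>) G"
  proof (rule eventually_mono)
    fix y assume "\<forall>x\<in>F. x \<notin> A y"
    then have "A y \<subseteq> S - F" using assms(2) by auto
    then have "\<bar>infsum f (A y)\<bar> \<le> infsum (\<lambda>x. \<bar>f x\<bar>) (S - F)"
      by (rule abs_infsum_le_infsum_abs[OF summable_on_subset_banach[OF assms(1)], OF Diff_subset])
    then show "dist (infsum f (A y)) 0 < \<epsilon>" using F(3) \<open>\<epsilon> > 0\<close> by simp
  qed
qed

lemma square_sum_ordered:
  fixes d :: "'a::linorder \<Rightarrow> real"
  assumes "finite A"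
  shows "(sum d A)\<^sup>2 = (\<Sum>u\<in>A. d u * (2 * sum d {v\<in>A. v < u} + d u))"
  using assms
proof (induction A rule: finite_linorder_max_induct)
  case (insert b A)
  have "{v \<in> insert b A. v < b} = A" "\<And>u. u \<in> A \<Longrightarrow> {v \<in> insert b A. v < u} = {v \<in> A. v < u}"
    using insert(2) by auto
  moreover have "b \<notin> A" using insert(2) by auto
  ultimately show ?case
    using insert(1,3) by (simp add: power2_eq_square algebra_simps sum_distrib_left cong: sum.cong)
qed simp

lemma square_infsum_ordered_approx:
  fixes d :: "'a::linorder \<Rightarrow> real"
  assumes "d summable_on S" "finite A" "A \<subseteq> S"
  shows "(\<lambda>u. d u * (2 * infsum d {v\<in>S. v < u} + d u)) summable_on S"
    "\<bar>(infsum d S)\<^sup>2 - infsum (\<lambda>u. d u * (2 * infsum d {v\<in>S. v < u} + d u)) S\<bar>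
      \<le> 7 * infsum (\<lambda>u. \<bar>d u\<bar>) S * infsum (\<lambda>u. \<bar>d u\<bar>) (S - A)"
proof -
  let ?J = "\<lambda>u. infsum d {v\<in>S. v < u}"
  let ?Q = "\<lambda>u. d u * (2 * ?J u + d u)"
  define K where "K = infsum (\<lambda>u. \<bar>d u\<bar>) S"
  define \<tau> where "\<tau> = infsum (\<lambda>u. \<bar>d u\<bar>) (S - A)"
  have abs: "(\<lambda>u. \<bar>d u\<bar>) summable_on S"
    using assms(1) summable_on_iff_abs_summable_on_real[of d] by simp
  have \<tau>: "0 \<le> \<tau>" unfolding \<tau>_def by (rule infsum_nonneg) simp
  have J_le: "\<bar>?J u\<bar> \<le> K" for u
    unfolding K_def by (rule abs_infsum_le_infsum_abs[OF assms(1)]) auto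
  have Q_factor: "\<bar>2 * ?J u + d u\<bar> \<le> 3 * K" if "u \<in> S" for u
    using J_le[of u] abs_le_infsum_abs[OF abs that] unfolding K_def by auto
  show Q: "?Q summable_on S" using summable_on_mult_bounded[OF assms(1) Q_factor] .
  have tail: "\<bar>infsum d T\<bar> \<le> \<tau>" if "T \<subseteq> S - A" for T
    unfolding \<tau>_def by (rule abs_infsum_le_infsum_abs[OF summable_on_subset_banach[OF assms(1) Diff_subset] that])
  have sum_le: "\<bar>sum d A\<bar> \<le> K" unfolding K_def by (rule abs_sum_le_infsum_abs[OF abs assms(2,3)])
  have p1: "\<bar>(infsum d S)\<^sup>2 - (sum d A)\<^sup>2\<bar> \<le> 2 * K * \<tau>"
  proof -
    have "\<bar>(infsum d S)\<^sup>2 - (sum d A)\<^sup>2\<bar> = \<bar>infsum d S - sum d A\<bar> * \<bar>infsum d S + sum d A\<bar>"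
      by (simp add: power2_eq_square square_diff_square_factored abs_mult mult.commute)
    also have "\<dots> \<le> \<tau> * (2 * K)"
      using tail[of "S - A"] infsum_Diff_finite[OF assms] sum_le \<tau>
        abs_infsum_le_infsum_abs[OF assms(1) order_refl] unfolding K_def[symmetric]
      by (intro mult_mono) auto
    finally show ?thesis by (simp add: algebra_simps)
  qed
  define JA where "JA u = sum d {v\<in>A. v < u}" for u
  have J_close: "\<bar>?J u - JA u\<bar> \<le> \<tau>" for u
  proof -
    have "{v\<in>A. v < u} \<subseteq> {v\<in>S. v < u}" using assms(3) by auto
    then have "?J u - JA u = infsum d ({v\<in>S. v < u} - {v\<in>A. v < u})"
      unfolding JA_def using assms(2) summable_on_subset_banach[OF assms(1)]
      by (subst infsum_Diff_finite) auto
    also have "{v\<in>S. v < u} - {v\<in>A. v < u} = {v\<in>S. v < u} - A" by auto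
    finally show ?thesis using tail[of "{v\<in>S. v < u} - A"] by auto
  qed
  have p2: "\<bar>(\<Sum>u\<in>A. ?Q u) - (sum d A)\<^sup>2\<bar> \<le> 2 * K * \<tau>"
  proof -
    have "(\<Sum>u\<in>A. ?Q u) - (sum d A)\<^sup>2 = (\<Sum>u\<in>A. 2 * d u * (?J u - JA u))"
      unfolding square_sum_ordered[OF assms(2)] JA_def by (simp add: sum_subtractf[symmetric] algebra_simps)
    also have "\<bar>\<dots>\<bar> \<le> (\<Sum>u\<in>A. \<bar>d u\<bar> * (2 * \<tau>))"
      using J_close by (intro order_trans[OF sum_abs] sum_mono) (simp add: abs_mult mult_left_mono)
    also have "\<dots> \<le> K * (2 * \<tau>)"
      using abs_sum_le_infsum_abs[of "\<lambda>u. \<bar>d u\<bar>" S A] abs assms(2,3) \<tau> unfolding K_def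
      by (simp add: sum_distrib_right[symmetric] mult_right_mono)
    finally show ?thesis by (simp add: algebra_simps)
  qed
  have p3: "\<bar>infsum ?Q S - (\<Sum>u\<in>A. ?Q u)\<bar> \<le> 3 * K * \<tau>"
    using infsum_mult_bounded_minus_sum[OF assms, of "\<lambda>u. 2 * ?J u + d u", OF Q_factor]
    unfolding \<tau>_def by (simp add: algebra_simps)
  from p1 p2 p3 show "\<bar>(infsum d S)\<^sup>2 - infsum ?Q S\<bar> \<le> 7 * K * \<tau>" by linarith
qed

lemma square_infsum_ordered:
  fixes d :: "'a::linorder \<Rightarrow> real"
  assumes "d summable_on S"
  shows "(\<lambda>u. d u * (2 * infsum d {v\<in>S. v < u} + d u)) summable_on S"
    "(infsum d S)\<^sup>2 = infsum (\<lambda>u. d u * (2 * infsum d {v\<in>S. v < u} + d u)) S"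
proof -
  let ?Q = "\<lambda>u. d u * (2 * infsum d {v\<in>S. v < u} + d u)"
  define K where "K = infsum (\<lambda>u. \<bar>d u\<bar>) S"
  have K: "0 \<le> 7 * K" unfolding K_def by (simp add: infsum_nonneg)
  show "?Q summable_on S" using square_infsum_ordered_approx(1)[OF assms, of "{}"] by simp
  have "\<bar>(infsum d S)\<^sup>2 - infsum ?Q S\<bar> \<le> \<epsilon>" if "\<epsilon> > 0" for \<epsilon>
  proof -
    obtain A where A: "finite A" "A \<subseteq> S" and small: "infsum (\<lambda>u. \<bar>d u\<bar>) (S - A) * (7 * K) \<le> \<epsilon>"
      using summable_on_small_abs_tail[OF assms \<open>\<epsilon> > 0\<close> K] by blast
    have "7 * K * infsum (\<lambda>u. \<bar>d u\<bar>) (S - A) \<le> \<epsilon>" using small by (simp add: mult.commute)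
    then show ?thesis using square_infsum_ordered_approx(2)[OF assms A] unfolding K_def by linarith
  qed
  then show "(infsum d S)\<^sup>2 = infsum ?Q S"
    using dense_eq0_I[of "(infsum d S)\<^sup>2 - infsum ?Q S"] by simp
qed

section \<open>Jumps of a regulated path of bounded variation\<close>

lemma tendsto_right_lim:
  assumes "regulated_path f" "0 \<le> s"
  shows "(f \<longlongrightarrow> right_lim f s) (at_right s)"
proof -
  obtain l where "(f \<longlongrightarrow> l) (at_right s)" using assms unfolding regulated_path_def by blast
  moreover from this have "right_lim f s = l" unfolding right_lim_def by (intro tendsto_Lim) auto
  ultimately show ?thesis by simp
qed

lemma tendsto_left_lim:
  assumes "regulated_path f" "0 < s"
  shows "(f \<longlongrightarrow> left_lim f s) (at_left s)"
proof -
  obtain l where "(f \<longlongrightarrow> l) (at_left s)" using assms unfolding regulated_path_def by blast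
  moreover from this have "left_lim f s = l" unfolding left_lim_def by (intro tendsto_Lim) auto
  ultimately show ?thesis by simp
qed

lemma eventually_at_right_0_separates:
  fixes F :: "real set"
  assumes "finite F"
  shows "\<forall>\<^sub>F \<delta> in at_right 0. \<forall>u\<in>F. \<forall>v\<in>F. u < v \<longrightarrow> \<delta> < v - u"
proof (intro eventually_ball_finite ballI assms)
  fix u v assume "u \<in> F" "v \<in> F"
  show "\<forall>\<^sub>F \<delta> in at_right 0. u < v \<longrightarrow> \<delta> < v - u"
  proof (cases "u < v")
    case True
    then show ?thesis unfolding eventually_at_right_field by (intro exI[of _ "v - u"]) auto
  qed simp
qed

text \<open>Jumps at finitely many points are limits of increments over disjoint small intervals.\<close>
lemma sum_abs_right_jumps_le_variation:
  assumes "regulated_path f" "bounded_variation_on f a b" "0 \<le> a" "finite F" "F \<subseteq> {a..<b}"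
  shows "(\<Sum>u\<in>F. \<bar>right_lim f u - f u\<bar>) \<le> variation f a b"
proof (rule tendsto_upperbound)
  show "((\<lambda>\<delta>. \<Sum>u\<in>F. \<bar>f (u + \<delta>) - f u\<bar>) \<longlongrightarrow> (\<Sum>u\<in>F. \<bar>right_lim f u - f u\<bar>)) (at_right 0)"
  proof (intro tendsto_sum tendsto_rabs tendsto_diff tendsto_const)
    fix u assume "u \<in> F"
    then have "(f \<longlongrightarrow> right_lim f u) (at_right u)"
      using assms(3,5) by (intro tendsto_right_lim[OF assms(1)]) auto
    then show "((\<lambda>\<delta>. f (u + \<delta>)) \<longlongrightarrow> right_lim f u) (at_right 0)"
      unfolding filterlim_at_right_to_0[of f _ u] by (simp add: add.commute)
  qed
  have "\<forall>\<^sub>F \<delta> in at_right 0. \<forall>u\<in>F. 0 < \<delta> \<and> \<delta> < b - u"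
  proof (intro eventually_ball_finite ballI assms(4))
    fix u assume "u \<in> F"
    then show "\<forall>\<^sub>F \<delta> in at_right 0. 0 < \<delta> \<and> \<delta> < b - u"
      using assms(5) unfolding eventually_at_right_field by (intro exI[of _ "b - u"]) auto
  qed
  with eventually_at_right_0_separates[OF assms(4)]
  show "\<forall>\<^sub>F \<delta> in at_right 0. (\<Sum>u\<in>F. \<bar>f (u + \<delta>) - f u\<bar>) \<le> variation f a b"
  proof eventually_elim
    case (elim \<delta>)
    then show ?case
      using sum_disjoint_increments_le_variation[OF assms(4,2), of "\<lambda>u. u" "\<lambda>u. u + \<delta>"] assms(5)
      by force
  qed
qed simp

lemma sum_abs_left_jumps_le_variation:
  assumes "regulated_path f" "bounded_variation_on f a b" "0 \<le> a" "finite F" "F \<subseteq> {a<..b}"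
  shows "(\<Sum>u\<in>F. \<bar>f u - left_lim f u\<bar>) \<le> variation f a b"
proof (rule tendsto_upperbound)
  show "((\<lambda>\<delta>. \<Sum>u\<in>F. \<bar>f u - f (u - \<delta>)\<bar>) \<longlongrightarrow> (\<Sum>u\<in>F. \<bar>f u - left_lim f u\<bar>)) (at_right 0)"
  proof (intro tendsto_sum tendsto_rabs tendsto_diff tendsto_const)
    fix u assume "u \<in> F"
    then have "(f \<longlongrightarrow> left_lim f u) (at_left u)"
      using assms(3,5) by (intro tendsto_left_lim[OF assms(1)]) auto
    then have "((\<lambda>x. f (- x)) \<longlongrightarrow> left_lim f u) (at_right (- u))"
      unfolding filterlim_at_left_to_right[of f _ u] .
    then show "((\<lambda>\<delta>. f (u - \<delta>)) \<longlongrightarrow> left_lim f u) (at_right 0)"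
      unfolding filterlim_at_right_to_0[of _ _ "- u"] by simp
  qed
  have "\<forall>\<^sub>F \<delta> in at_right 0. \<forall>u\<in>F. 0 < \<delta> \<and> \<delta> < u - a"
  proof (intro eventually_ball_finite ballI assms(4))
    fix u assume "u \<in> F"
    then show "\<forall>\<^sub>F \<delta> in at_right 0. 0 < \<delta> \<and> \<delta> < u - a"
      using assms(5) unfolding eventually_at_right_field by (intro exI[of _ "u - a"]) auto
  qed
  with eventually_at_right_0_separates[OF assms(4)]
  show "\<forall>\<^sub>F \<delta> in at_right 0. (\<Sum>u\<in>F. \<bar>f u - f (u - \<delta>)\<bar>) \<le> variation f a b"
  proof eventually_elim
    case (elim \<delta>)
    then show ?case
      using sum_disjoint_increments_le_variation[OF assms(4,2), of "\<lambda>u. u - \<delta>" "\<lambda>u. u"] assms(5)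
      by force
  qed
qed simp

definition right_jump :: "(real \<Rightarrow> real) \<Rightarrow> real \<Rightarrow> real" where
  "right_jump f s = right_lim f s - f s"

definition jump_part :: "(real \<Rightarrow> real) \<Rightarrow> real \<Rightarrow> real" where
  "jump_part f t = infsum (right_jump f) {0..<t}"

lemma right_cont_part_eq: "right_cont_part f t = f t - jump_part f t"
  unfolding right_cont_part_def jump_part_def right_jump_def by simp

lemma right_jump_abs_summable:
  assumes "regulated_path f" "bv_path f"
  shows "(\<lambda>u. \<bar>right_jump f u\<bar>) summable_on {0..<t}"
proof (cases "0 \<le> t")
  case True
  then show ?thesis
    using sum_abs_right_jumps_le_variation[OF assms(1) bv_path_bounded_variation_on[OF assms(2)]]
    unfolding right_jump_def
    by (intro nonneg_bdd_above_summable_on bdd_aboveI2[of _ _ "variation f 0 t"]) auto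
qed simp

lemma right_jump_summable:
  assumes "regulated_path f" "bv_path f" "A \<subseteq> {0..<t}"
  shows "right_jump f summable_on A"
  using right_jump_abs_summable[OF assms(1,2), of t]
    summable_on_iff_abs_summable_on_real[of "right_jump f" "{0..<t}"]
    summable_on_subset_banach assms(3) by auto

lemma left_jump_summable:
  assumes "regulated_path f" "bv_path f"
  shows "(\<lambda>u. f u - left_lim f u) summable_on {0<..t}"
proof (cases "0 \<le> t")
  case True
  then have "(\<lambda>u. \<bar>f u - left_lim f u\<bar>) summable_on {0<..t}"
    using sum_abs_left_jumps_le_variation[OF assms(1) bv_path_bounded_variation_on[OF assms(2)]]
    by (intro nonneg_bdd_above_summable_on bdd_aboveI2[of _ _ "variation f 0 t"]) auto
  then show ?thesis using summable_on_iff_abs_summable_on_real[of "\<lambda>u. f u - left_lim f u"] by simp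
qed simp

lemma jump_part_diff:
  assumes "regulated_path f" "bv_path f" "0 \<le> a" "a \<le> b"
  shows "jump_part f b - jump_part f a = infsum (right_jump f) {a..<b}"
proof -
  have "{0..<b} = {0..<a} \<union> {a..<b}" using assms(3,4) by auto
  moreover have "right_jump f summable_on {0..<a}" "right_jump f summable_on {a..<b}"
    using right_jump_summable[OF assms(1,2), of _ b] assms(3,4) by auto
  ultimately show ?thesis unfolding jump_part_def by (simp add: infsum_Un_disjoint ivl_disj_int_two(3))
qed

text \<open>The increments of the right-continuous part are dominated by those of the variation plus
  the cumulated absolute jumps.\<close>
lemma bv_path_right_cont_part:
  assumes "regulated_path f" "bv_path f"
  shows "bv_path (right_cont_part f)"
  unfolding bv_path_def
proof (intro allI impI)
  fix t :: real assume "0 \<le> t"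
  define \<psi> where "\<psi> s = variation f 0 s + infsum (\<lambda>u. \<bar>right_jump f u\<bar>) {0..<s}" for s
  have bound: "\<bar>right_cont_part f b - right_cont_part f a\<bar> \<le> \<psi> b - \<psi> a"
    if "0 \<le> a" "a \<le> b" for a b
  proof -
    have "{0..<b} = {0..<a} \<union> {a..<b}" using that by auto
    then have "\<psi> b - \<psi> a = variation f 0 b - variation f 0 a
        + infsum (\<lambda>u. \<bar>right_jump f u\<bar>) {a..<b}"
      unfolding \<psi>_def using that right_jump_abs_summable[OF assms, of b]
      by (simp add: infsum_Un_disjoint summable_on_subset_banach ivl_disj_int_two(3))
    moreover have "\<bar>jump_part f b - jump_part f a\<bar> \<le> infsum (\<lambda>u. \<bar>right_jump f u\<bar>) {a..<b}"
      unfolding jump_part_diff[OF assms that]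
      using abs_infsum_le_infsum_abs[OF right_jump_summable[OF assms, of "{a..<b}" b]] that by auto
    ultimately show ?thesis
      using bv_path_abs_diff_le[OF assms(2) that] unfolding right_cont_part_eq by linarith
  qed
  show "bounded_variation_on (right_cont_part f) 0 t"
    by (rule bounded_variation_on_telescope(1)[OF \<open>0 \<le> t\<close>, of _ \<psi>]) (use bound in auto)
qed

lemma continuous_right_cont_part:
  assumes "regulated_path f" "bv_path f" "0 \<le> s"
  shows "continuous (at_right s) (right_cont_part f)"
proof -
  let ?g = "right_cont_part f" and ?J = "jump_part f" and ?d = "right_jump f"
  let ?h = "\<lambda>y. f y - ?J s - ?d s - infsum ?d {s<..<min y (s + 1)}"
  have "((\<lambda>y. infsum ?d {s<..<min y (s + 1)}) \<longlongrightarrow> 0) (at_right s)"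
  proof (rule tendsto_infsum_escaping_sets[OF right_jump_summable[OF assms(1,2) order_refl]])
    show "{s<..<min y (s + 1)} \<subseteq> {0..<s + 1}" for y using assms(3) by auto
    show "eventually (\<lambda>y. x \<notin> {s<..<min y (s + 1)}) (at_right s)" for x
    proof (cases "s < x")
      case True
      then show ?thesis unfolding eventually_at_right_field by (intro exI[of _ x]) auto
    qed auto
  qed
  then have "(?h \<longlongrightarrow> right_lim f s - ?J s - ?d s - 0) (at_right s)"
    by (intro tendsto_diff tendsto_right_lim[OF assms(1,3)] tendsto_const)
  moreover have "right_lim f s - ?J s - ?d s - 0 = ?g s"
    unfolding right_cont_part_eq right_jump_def by simp
  moreover have "eventually (\<lambda>y. ?h y = ?g y) (at_right s)"
    unfolding eventually_at_right_field
  proof (intro exI[of _ "s + 1"] conjI allI impI)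
    fix y assume y: "s < y" "y < s + 1"
    have "right_jump f summable_on {s<..<y}"
      by (rule right_jump_summable[OF assms(1,2), of _ y]) (use assms(3) in auto)
    moreover have "{s..<y} = insert s {s<..<y}" using y by auto
    ultimately have "infsum ?d {s..<y} = ?d s + infsum ?d {s<..<y}"
      by (simp add: infsum_insert)
    then show "?h y = ?g y"
      using jump_part_diff[OF assms(1,2,3), of y] y unfolding right_cont_part_eq by simp
  qed simp
  ultimately show ?thesis
    unfolding continuous_within by (simp add: tendsto_cong)
qed

lemma tendsto_right_cont_part_left:
  assumes "regulated_path f" "bv_path f" "0 < s"
  shows "(right_cont_part f \<longlongrightarrow> left_lim f s - jump_part f s) (at_left s)"
proof -
  let ?h = "\<lambda>y. f y - jump_part f s + infsum (right_jump f) {max y 0..<s}"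
  have "((\<lambda>y. infsum (right_jump f) {max y 0..<s}) \<longlongrightarrow> 0) (at_left s)"
  proof (rule tendsto_infsum_escaping_sets[OF right_jump_summable[OF assms(1,2) order_refl]])
    show "{max y 0..<s} \<subseteq> {0..<s}" for y by auto
    show "x \<in> {0..<s} \<Longrightarrow> eventually (\<lambda>y. x \<notin> {max y 0..<s}) (at_left s)" for x
      unfolding eventually_at_left_field by (intro exI[of _ x]) auto
  qed
  then have "(?h \<longlongrightarrow> left_lim f s - jump_part f s + 0) (at_left s)"
    by (intro tendsto_add tendsto_diff tendsto_left_lim[OF assms(1,3)] tendsto_const)
  moreover have "eventually (\<lambda>y. ?h y = right_cont_part f y) (at_left s)"
    unfolding eventually_at_left_field using assms(3)
    by (intro exI[of _ 0]) (auto simp: right_cont_part_eq simp flip: jump_part_diff[OF assms(1,2)])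
  ultimately show ?thesis by (simp add: tendsto_cong)
qed

lemma regulated_path_right_cont_part:
  assumes "regulated_path f" "bv_path f"
  shows "regulated_path (right_cont_part f)"
  unfolding regulated_path_def
  using tendsto_right_cont_part_left[OF assms] continuous_right_cont_part[OF assms]
  by (auto simp: continuous_within)

lemma left_lim_right_cont_part:
  assumes "regulated_path f" "bv_path f" "0 < s"
  shows "left_lim (right_cont_part f) s = left_lim f s - jump_part f s"
  unfolding left_lim_def[of "right_cont_part f"]
  using tendsto_right_cont_part_left[OF assms] by (intro tendsto_Lim) auto

section \<open>Jordan decomposition\<close>

definition variation_function :: "(real \<Rightarrow> real) \<Rightarrow> real \<Rightarrow> real" where
  "variation_function g s = (if s \<le> 0 then 0 else variation g 0 s)"

definition variation_excess :: "(real \<Rightarrow> real) \<Rightarrow> real \<Rightarrow> real" where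
  "variation_excess g s = (if s \<le> 0 then 0 else variation g 0 s - (g s - g 0))"

lemma stieltjes_Ioc_altdef:
  "stieltjes_Ioc g h a b =
     (\<integral>x\<in>{a<..b}. h x \<partial>interval_measure (variation_function g))
   - (\<integral>x\<in>{a<..b}. h x \<partial>interval_measure (variation_excess g))"
  unfolding stieltjes_Ioc_def variation_function_def[abs_def] variation_excess_def[abs_def] Let_def ..

lemma variation_function_diff:
  assumes "bv_path g" "0 \<le> a" "a \<le> b"
  shows "variation_function g b - variation_function g a = variation g a b"
  using bv_path_variation_diff[OF assms] bv_path_variation_0[OF assms(1)] assms(2,3)
  by (cases "b = 0") (auto simp: variation_function_def)

lemma variation_function_diff_excess:
  assumes "0 \<le> a" "a \<le> b"
  shows "(variation_function g b - variation_function g a) - (variation_excess g b - variation_excess g a)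
    = g b - g a"
  using assms by (cases "b = 0") (auto simp: variation_function_def variation_excess_def)

lemma mono_variation_function:
  assumes "bv_path g"
  shows "mono (variation_function g)"
proof (rule monoI)
  fix x y :: real assume "x \<le> y"
  then show "variation_function g x \<le> variation_function g y"
    using variation_function_diff[OF assms, of "max x 0" "max y 0"]
      variation_nonneg[OF bv_path_bounded_variation_on[OF assms, of "max x 0" "max y 0"]]
    by (auto simp: variation_function_def max_def split: if_splits)
qed

lemma mono_variation_excess:
  assumes "bv_path g"
  shows "mono (variation_excess g)"
proof (rule monoI)
  fix x y :: real assume "x \<le> y"
  then show "variation_excess g x \<le> variation_excess g y"
    using bv_path_abs_diff_le[OF assms, of "max x 0" "max y 0"] bv_path_variation_0[OF assms]
    by (auto simp: variation_excess_def max_def split: if_splits)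
qed

text \<open>Right-continuity of \<open>g\<close> at \<open>s\<close> bounds the increments near \<open>s\<close>, and then
  \<open>exists_small_variation_right\<close> makes the variation on some \<open>[s,y\<^sub>1]\<close> small.\<close>
lemma continuous_right_variation_function:
  assumes "bv_path g" "\<And>s. 0 \<le> s \<Longrightarrow> continuous (at_right s) g"
  shows "continuous (at_right s) (variation_function g)"
  unfolding continuous_within
proof (cases "s < 0")
  case True
  have "eventually (\<lambda>y. variation_function g y = variation_function g s) (at_right s)"
    unfolding eventually_at_right_field using True
    by (intro exI[of _ 0]) (auto simp: variation_function_def)
  then show "(variation_function g \<longlongrightarrow> variation_function g s) (at_right s)"
    by (rule tendsto_eventually)
next
  case False
  then have s: "0 \<le> s" by simp
  show "(variation_function g \<longlongrightarrow> variation_function g s) (at_right s)"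
  proof (rule tendstoI)
    fix \<epsilon> :: real assume "\<epsilon> > 0"
    have "eventually (\<lambda>y. dist (g y) (g s) < \<epsilon> / 4) (at_right s)"
      using assms(2)[OF s] \<open>\<epsilon> > 0\<close> unfolding continuous_within by (intro tendstoD) auto
    then obtain b where b: "b > s" "\<And>y. s < y \<Longrightarrow> y < b \<Longrightarrow> dist (g y) (g s) < \<epsilon> / 4"
      unfolding eventually_at_right_field by blast
    define s' where "s' = (s + b) / 2"
    have s': "s < s'" "s' < b" using b(1) unfolding s'_def by auto
    obtain y1 where y1: "s < y1" "y1 \<le> s'" "variation g s y1 \<le> 2 * (\<epsilon> / 4)"
    proof (rule exists_small_variation_right[OF bv_path_bounded_variation_on[OF assms(1) s] s'(1)])
      show "\<bar>g y - g s\<bar> \<le> \<epsilon> / 4" if "s < y" "y \<le> s'" for y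
        using b(2)[of y] s' that by (simp add: dist_real_def)
    qed (use s' \<open>\<epsilon> > 0\<close> in auto)
    have "eventually (\<lambda>y. s < y \<and> y < y1) (at_right s)"
      unfolding eventually_at_right_field using y1(1) by (intro exI[of _ y1]) auto
    then show "eventually (\<lambda>y. dist (variation_function g y) (variation_function g s) < \<epsilon>) (at_right s)"
    proof (rule eventually_mono)
      fix y assume y: "s < y \<and> y < y1"
      have "variation g s y1 = variation g s y + variation g y y1"
        using variation_additive[OF bv_path_bounded_variation_on[OF assms(1) s, of y1]] y by auto
      moreover have "0 \<le> variation g y y1"
        using variation_nonneg[OF bv_path_bounded_variation_on[OF assms(1), of y y1]] y s by auto
      moreover have "0 \<le> variation g s y"
        using variation_nonneg[OF bv_path_bounded_variation_on[OF assms(1) s, of y]] y by auto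
      ultimately show "dist (variation_function g y) (variation_function g s) < \<epsilon>"
        using variation_function_diff[OF assms(1) s, of y] y y1(3) \<open>\<epsilon> > 0\<close>
        by (simp add: dist_real_def)
    qed
  qed
qed

lemma continuous_right_variation_excess:
  assumes "bv_path g" "\<And>s. 0 \<le> s \<Longrightarrow> continuous (at_right s) g"
  shows "continuous (at_right s) (variation_excess g)"
proof (cases "s < 0")
  case True
  have "eventually (\<lambda>y. variation_excess g y = variation_excess g s) (at_right s)"
    unfolding eventually_at_right_field using True
    by (intro exI[of _ 0]) (auto simp: variation_excess_def)
  then show ?thesis unfolding continuous_within by (rule tendsto_eventually)
next
  case False
  then have s: "0 \<le> s" by simp
  have "((\<lambda>y. variation_function g y - (g y - g 0)) \<longlongrightarrow>
      variation_function g s - (g s - g 0)) (at_right s)"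
    using continuous_right_variation_function[OF assms, of s] assms(2)[OF s]
    unfolding continuous_within by (intro tendsto_intros) auto
  moreover have "variation_function g s - (g s - g 0) = variation_excess g s"
    using s by (auto simp: variation_function_def variation_excess_def)
  moreover have "eventually (\<lambda>y. variation_function g y - (g y - g 0) = variation_excess g y) (at_right s)"
    unfolding eventually_at_right_field using s
    by (intro exI[of _ "s + 1"]) (auto simp: variation_excess_def variation_function_def)
  ultimately show ?thesis unfolding continuous_within by (simp add: tendsto_cong)
qed

definition distribution_function :: "(real \<Rightarrow> real) \<Rightarrow> bool" where
  "distribution_function F \<longleftrightarrow> mono F \<and> (\<forall>a. continuous (at_right a) F)"

lemma distribution_function_variation_function:
  "bv_path g \<Longrightarrow> (\<And>s. 0 \<le> s \<Longrightarrow> continuous (at_right s) g) \<Longrightarrow>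
    distribution_function (variation_function g)"
  unfolding distribution_function_def
  using mono_variation_function continuous_right_variation_function by blast

lemma distribution_function_variation_excess:
  "bv_path g \<Longrightarrow> (\<And>s. 0 \<le> s \<Longrightarrow> continuous (at_right s) g) \<Longrightarrow>
    distribution_function (variation_excess g)"
  unfolding distribution_function_def
  using mono_variation_excess continuous_right_variation_excess by blast

section \<open>Integration against a distribution function\<close>

lemma set_borel_measurable_uniform_limit:
  fixes h :: "real \<Rightarrow> real" and \<psi> :: "nat \<Rightarrow> real \<Rightarrow> real"
  assumes "\<And>n. set_borel_measurable borel I (\<psi> n)"
    "\<And>n x. x \<in> I \<Longrightarrow> \<bar>h x - \<psi> n x\<bar> \<le> inverse (real (Suc n))"
  shows "set_borel_measurable borel I h"
  unfolding set_borel_measurable_def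
proof (rule borel_measurable_LIMSEQ_real)
  show "(\<lambda>x. indicator I x *\<^sub>R \<psi> n x) \<in> borel_measurable borel" for n
    using assms(1) unfolding set_borel_measurable_def .
  fix x :: real
  show "(\<lambda>n. indicator I x *\<^sub>R \<psi> n x) \<longlonglongrightarrow> indicator I x *\<^sub>R h x"
  proof (cases "x \<in> I")
    case True
    have "(\<lambda>n. \<psi> n x - h x) \<longlonglongrightarrow> 0"
      using assms(2)[OF True]
      by (intro Lim_null_comparison[OF _ LIMSEQ_inverse_real_of_nat] always_eventually)
         (simp add: abs_minus_commute)
    then have "(\<lambda>n. (\<psi> n x - h x) + h x) \<longlonglongrightarrow> 0 + h x" by (intro tendsto_add) auto
    then show ?thesis using True by simp
  qed simp
qed

context
  fixes F :: "real \<Rightarrow> real"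
  assumes F: "distribution_function F"
begin

lemma distribution_function_emeasure_Ioc:
  "a \<le> b \<Longrightarrow> emeasure (interval_measure F) {a<..b} = F b - F a"
  using emeasure_interval_measure_Ioc[of a b F] F monoD[of F]
  unfolding distribution_function_def by auto

lemma distribution_function_measure_Ioc:
  "a \<le> b \<Longrightarrow> measure (interval_measure F) {a<..b} = F b - F a"
  using measure_interval_measure_Ioc[of a b F] F monoD[of F]
  unfolding distribution_function_def by auto

lemma distribution_function_mono: "x \<le> y \<Longrightarrow> F x \<le> F y"
  using F unfolding distribution_function_def by (auto dest: monoD)

lemma distribution_function_measure_subset_Ioc:
  assumes "a \<le> b" "A \<subseteq> {a<..b}" "A \<in> sets borel"
  shows "emeasure (interval_measure F) A < \<infinity>" "measure (interval_measure F) A \<le> F b - F a"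
proof -
  have "emeasure (interval_measure F) A \<le> emeasure (interval_measure F) {a<..b}"
    using assms(2,3) by (intro emeasure_mono) auto
  then show "emeasure (interval_measure F) A < \<infinity>"
    using distribution_function_emeasure_Ioc[OF assms(1)] by (simp add: order_le_less_trans)
  have "{a<..b} \<in> fmeasurable (interval_measure F)"
    using distribution_function_emeasure_Ioc[OF assms(1)] by (intro fmeasurableI) auto
  then show "measure (interval_measure F) A \<le> F b - F a"
    using measure_mono_fmeasurable[OF assms(2), of "interval_measure F"] assms(3) distribution_function_measure_Ioc[OF assms(1)]
    by simp
qed

lemma tendsto_measure_singleton:
  "(\<lambda>n. F s - F (s - inverse (real (Suc n)))) \<longlonglongrightarrow> measure (interval_measure F) {s}"
proof -
  let ?M = "interval_measure F"
  define A where "A n = {s - inverse (real (Suc n))<..s}" for n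
  have em: "emeasure ?M (A n) = ennreal (F s - F (s - inverse (real (Suc n))))" for n
    unfolding A_def by (rule distribution_function_emeasure_Ioc) simp
  have "A n \<subseteq> A m" if "m \<le> n" for m n
  proof -
    have "inverse (real (Suc n)) \<le> inverse (real (Suc m))" using that by (simp add: le_imp_inverse_le)
    then show ?thesis unfolding A_def subset_iff greaterThanAtMost_iff by linarith
  qed
  then have dec: "decseq A" unfolding decseq_def by blast
  have inter: "(\<Inter>n. A n) = {s}"
  proof (intro equalityI subsetI)
    fix x assume x: "x \<in> (\<Inter>n. A n)"
    have "\<not> x < s"
    proof
      assume "x < s"
      then obtain n where "inverse (real (Suc n)) < s - x"
        using reals_Archimedean[of "s - x"] by auto
      moreover have "x \<in> A n" using x by blast
      ultimately show False unfolding A_def by simp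
    qed
    then show "x \<in> {s}" using x unfolding A_def by auto
  qed (auto simp: A_def)
  have "(\<lambda>n. emeasure ?M (A n)) \<longlonglongrightarrow> emeasure ?M (\<Inter>n. A n)"
  proof (rule Lim_emeasure_decseq[OF _ dec])
    show "range A \<subseteq> sets ?M" by (auto simp: A_def)
    show "emeasure ?M (A n) \<noteq> \<infinity>" for n using em[of n] by simp
  qed
  then have "(\<lambda>n. ennreal (F s - F (s - inverse (real (Suc n))))) \<longlonglongrightarrow> ennreal (measure ?M {s})"
    unfolding em inter
    using distribution_function_measure_subset_Ioc(1)[of "s - 1" s "{s}"]
      emeasure_eq_ennreal_measure[of ?M "{s}"] by auto
  then show ?thesis
    using distribution_function_mono by (intro tendsto_ennrealD) auto
qed

lemma set_integrable_Ioc_bounded: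
  fixes h :: "real \<Rightarrow> real"
  assumes "a \<le> b" "set_borel_measurable borel {a<..b} h" "\<And>x. x \<in> {a<..b} \<Longrightarrow> \<bar>h x\<bar> \<le> B"
  shows "set_integrable (interval_measure F) {a<..b} h"
  unfolding set_integrable_def
proof (rule Bochner_Integration.integrable_bound[where f="\<lambda>x. B * indicator {a<..b} x"])
  show "integrable (interval_measure F) (\<lambda>x. B * indicator {a<..b} x)"
    using distribution_function_emeasure_Ioc[OF assms(1)]
    by (intro integrable_mult_right integrable_real_indicator) auto
  show "(\<lambda>x. indicator {a<..b} x *\<^sub>R h x) \<in> borel_measurable (interval_measure F)"
    using assms(2) unfolding set_borel_measurable_def by simp
  show "AE x in interval_measure F. norm (indicator {a<..b} x *\<^sub>R h x) \<le> norm (B * indicator {a<..b} x)"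
    using assms(3) by (intro AE_I2) (force simp: indicator_def abs_mult intro: order_trans[OF _ abs_ge_self])
qed

lemma set_integral_bounded_convergence:
  fixes S :: "nat \<Rightarrow> real \<Rightarrow> real"
  assumes "a \<le> b" "\<And>n. S n \<in> borel_measurable borel"
    "\<And>n x. \<bar>S n x\<bar> \<le> B * indicator {a<..b} x"
    "\<And>x. x \<in> {a<..b} \<Longrightarrow> (\<lambda>n. S n x) \<longlonglongrightarrow> h x"
  shows "set_integrable (interval_measure F) {a<..b} h"
    "(\<lambda>n. \<integral>x. S n x \<partial>interval_measure F) \<longlonglongrightarrow> (\<integral>x\<in>{a<..b}. h x \<partial>interval_measure F)"
proof -
  let ?M = "interval_measure F" and ?I = "{a<..b}"
  have lim: "(\<lambda>n. S n x) \<longlonglongrightarrow> indicator ?I x *\<^sub>R h x" for x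
  proof (cases "x \<in> ?I")
    case False
    then show ?thesis using assms(3)[of _ x] by simp
  qed (use assms(4) in simp)
  have meas: "(\<lambda>x. indicator ?I x *\<^sub>R h x) \<in> borel_measurable ?M"
    using borel_measurable_LIMSEQ_real[OF lim assms(2)] by simp
  have int: "integrable ?M (\<lambda>x. B * indicator ?I x)"
    using distribution_function_emeasure_Ioc[OF assms(1)]
    by (intro integrable_mult_right integrable_real_indicator) auto
  have S: "S n \<in> borel_measurable ?M" for n using assms(2) by simp
  have "AE x in ?M. (\<lambda>n. S n x) \<longlonglongrightarrow> indicator ?I x *\<^sub>R h x" using lim by simp
  moreover have "AE x in ?M. norm (S n x) \<le> B * indicator ?I x" for n using assms(3) by simp
  ultimately show "set_integrable ?M ?I h"
    "(\<lambda>n. \<integral>x. S n x \<partial>?M) \<longlonglongrightarrow> (\<integral>x\<in>?I. h x \<partial>?M)"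
    unfolding set_integrable_def set_lebesgue_integral_def
    by (rule integrable_dominated_convergence[where s=S, OF meas S int]
        integral_dominated_convergence[where s=S, OF meas S int])+
qed

lemma set_integral_Ioc_close:
  fixes h1 h2 :: "real \<Rightarrow> real"
  assumes "a \<le> b" "set_integrable (interval_measure F) {a<..b} h1"
    "set_integrable (interval_measure F) {a<..b} h2" "\<And>x. x \<in> {a<..b} \<Longrightarrow> \<bar>h1 x - h2 x\<bar> \<le> \<epsilon>"
  shows "\<bar>(\<integral>x\<in>{a<..b}. h1 x \<partial>interval_measure F) - (\<integral>x\<in>{a<..b}. h2 x \<partial>interval_measure F)\<bar>
    \<le> \<epsilon> * (F b - F a)"
proof -
  let ?M = "interval_measure F" and ?I = "{a<..b}"
  have "(\<integral>x\<in>?I. h1 x \<partial>?M) - (\<integral>x\<in>?I. h2 x \<partial>?M) = (\<integral>x\<in>?I. h1 x - h2 x \<partial>?M)"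
    using assms(2,3) by simp
  also have "\<bar>\<dots>\<bar> \<le> (\<integral>x. \<epsilon> * indicator ?I x \<partial>?M)"
    unfolding set_lebesgue_integral_def
  proof (rule integral_abs_bound_integral)
    show "integrable ?M (\<lambda>x. \<epsilon> * indicator ?I x)"
      using distribution_function_emeasure_Ioc[OF assms(1)]
      by (intro integrable_mult_right integrable_real_indicator) auto
    show "integrable ?M (\<lambda>x. indicator ?I x *\<^sub>R (h1 x - h2 x))"
      using set_integral_diff(1)[OF assms(2,3)] unfolding set_integrable_def .
    show "\<bar>indicator ?I x *\<^sub>R (h1 x - h2 x)\<bar> \<le> \<epsilon> * indicator ?I x" for x
      using assms(4)[of x] by (auto simp: indicator_def)
  qed
  also have "\<dots> = \<epsilon> * (F b - F a)"
    using distribution_function_measure_Ioc[OF assms(1)] by simp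
  finally show ?thesis .
qed

lemma set_integral_Ioc_uniform_approx:
  fixes h :: "real \<Rightarrow> real"
  assumes "a \<le> b"
    "\<And>\<epsilon>. \<epsilon> > 0 \<Longrightarrow> \<exists>\<psi> c. set_borel_measurable borel {a<..b} \<psi> \<and>
        (\<forall>x\<in>{a<..b}. \<bar>\<psi> x\<bar> \<le> c) \<and> (\<forall>x\<in>{a<..b}. \<bar>h x - \<psi> x\<bar> \<le> \<epsilon>) \<and>
        \<bar>(\<integral>x\<in>{a<..b}. \<psi> x \<partial>interval_measure F) - T\<bar> \<le> \<epsilon>"
  shows "set_integrable (interval_measure F) {a<..b} h"
    "(\<integral>x\<in>{a<..b}. h x \<partial>interval_measure F) = T"
proof -
  let ?I = "{a<..b}" and ?M = "interval_measure F"
  have "\<forall>n::nat. \<exists>\<psi>. set_borel_measurable borel ?I \<psi> \<and>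
        (\<forall>x\<in>?I. \<bar>h x - \<psi> x\<bar> \<le> inverse (real (Suc n)))"
    using assms(2) by (metis inverse_positive_iff_positive of_nat_0_less_iff zero_less_Suc)
  then obtain \<psi>s where "\<And>n. set_borel_measurable borel ?I (\<psi>s n)"
    "\<And>n x. x \<in> ?I \<Longrightarrow> \<bar>h x - \<psi>s n x\<bar> \<le> inverse (real (Suc n))"
    by metis
  then have meas: "set_borel_measurable borel ?I h"
    by (rule set_borel_measurable_uniform_limit)
  obtain \<psi>1 c1 where "\<forall>x\<in>?I. \<bar>\<psi>1 x\<bar> \<le> c1" "\<forall>x\<in>?I. \<bar>h x - \<psi>1 x\<bar> \<le> 1"
    using assms(2)[of 1] by auto
  then have "\<bar>h x\<bar> \<le> c1 + 1" if "x \<in> ?I" for x using that by force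
  then show int: "set_integrable ?M ?I h"
    using set_integrable_Ioc_bounded[OF assms(1) meas] by blast
  have approx: "\<bar>(\<integral>x\<in>?I. h x \<partial>?M) - T\<bar> \<le> \<epsilon> * (F b - F a + 1)" if e: "\<epsilon> > 0" for \<epsilon>
  proof -
    obtain \<psi> c where p: "set_borel_measurable borel ?I \<psi>"
        "\<forall>x\<in>?I. \<bar>\<psi> x\<bar> \<le> c" "\<forall>x\<in>?I. \<bar>h x - \<psi> x\<bar> \<le> \<epsilon>"
        "\<bar>(\<integral>x\<in>?I. \<psi> x \<partial>?M) - T\<bar> \<le> \<epsilon>"
      using assms(2)[OF e] by blast
    have "set_integrable ?M ?I \<psi>"
      using set_integrable_Ioc_bounded[OF assms(1) p(1)] p(2) by blast
    then have "\<bar>(\<integral>x\<in>?I. h x \<partial>?M) - (\<integral>x\<in>?I. \<psi> x \<partial>?M)\<bar> \<le> \<epsilon> * (F b - F a)"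
      using set_integral_Ioc_close[OF assms(1) int] p(3) by blast
    then show ?thesis using p(4) by (simp add: algebra_simps)
  qed
  have C: "0 < F b - F a + 1" using distribution_function_mono[OF assms(1)] by simp
  have "\<bar>(\<integral>x\<in>?I. h x \<partial>?M) - T\<bar> \<le> \<delta>" if "\<delta> > 0" for \<delta>
    using approx[of "\<delta> / (F b - F a + 1)"] that C by simp
  then show "(\<integral>x\<in>?I. h x \<partial>?M) = T"
    using dense_eq0_I[of "(\<integral>x\<in>?I. h x \<partial>?M) - T"] by simp
qed

lemma set_integral_Ioc_finite_support:
  fixes \<phi> :: "real \<Rightarrow> real"
  assumes "a \<le> b" "finite A" "A \<subseteq> {a<..b}"
  shows "set_borel_measurable borel {a<..b} (\<lambda>x. \<phi> x * indicator A x)"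
    "(\<integral>x\<in>{a<..b}. \<phi> x * indicator A x \<partial>interval_measure F) =
       (\<Sum>u\<in>A. \<phi> u * measure (interval_measure F) {u})"
proof -
  have ind: "indicator {a<..b} x *\<^sub>R (\<phi> x * indicator A x) = \<phi> x * indicator A x" for x
    using assms(3) by (auto simp: indicator_def)
  have sum: "\<phi> x * indicator A x = (\<Sum>u\<in>A. \<phi> u * indicator {u} x)" for x
    using assms(2) by (simp add: indicator_def sum.delta' if_distrib[of "\<lambda>v. _ * v"] cong: if_cong)
  show "set_borel_measurable borel {a<..b} (\<lambda>x. \<phi> x * indicator A x)"
    unfolding set_borel_measurable_def ind unfolding sum by measurable
  show "(\<integral>x\<in>{a<..b}. \<phi> x * indicator A x \<partial>interval_measure F) =
      (\<Sum>u\<in>A. \<phi> u * measure (interval_measure F) {u})"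
    unfolding set_lebesgue_integral_def ind
  proof (rule integral_indicator_finite_real[OF assms(2)])
    fix u assume "u \<in> A"
    then show "emeasure (interval_measure F) {u} < \<infinity>"
      using distribution_function_measure_subset_Ioc(1)[OF assms(1), of "{u}"] assms(3) by auto
  qed simp
qed

lemma set_integral_Ioc_finite_steps:
  fixes d :: "real \<Rightarrow> real"
  assumes "a \<le> b" "finite A" "A \<subseteq> {a..<b}"
  shows "set_borel_measurable borel {a<..b} (\<lambda>x. \<Sum>u\<in>A. d u * indicator {u<..b} x)"
    "(\<integral>x\<in>{a<..b}. (\<Sum>u\<in>A. d u * indicator {u<..b} x) \<partial>interval_measure F) = (\<Sum>u\<in>A. d u * (F b - F u))"
proof -
  let ?\<psi> = "\<lambda>x. \<Sum>u\<in>A. d u * indicator {u<..b} x"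
  have ind: "indicator {a<..b} x *\<^sub>R ?\<psi> x = ?\<psi> x" for x
    using assms(3) by (auto simp: indicator_def intro!: sum.neutral)
  show "set_borel_measurable borel {a<..b} ?\<psi>"
    unfolding set_borel_measurable_def ind by measurable
  have "(\<integral>x\<in>{a<..b}. ?\<psi> x \<partial>interval_measure F) = (\<Sum>u\<in>A. (\<integral>x. d u * indicator {u<..b} x \<partial>interval_measure F))"
    unfolding set_lebesgue_integral_def ind using assms(2,3) distribution_function_emeasure_Ioc
    by (intro Bochner_Integration.integral_sum integrable_mult_right integrable_real_indicator)
       (auto simp: subset_eq)
  also have "\<dots> = (\<Sum>u\<in>A. d u * (F b - F u))"
    using assms(3) distribution_function_measure_Ioc by (intro sum.cong) auto
  finally show "(\<integral>x\<in>{a<..b}. ?\<psi> x \<partial>interval_measure F) = (\<Sum>u\<in>A. d u * (F b - F u))" .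
qed

lemma set_integral_Ioc_summable:
  fixes \<phi> :: "real \<Rightarrow> real"
  assumes "a \<le> b" "\<phi> summable_on {a<..b}"
  shows "set_integrable (interval_measure F) {a<..b} \<phi>"
    "(\<lambda>x. \<phi> x * measure (interval_measure F) {x}) summable_on {a<..b}"
    "(\<integral>x\<in>{a<..b}. \<phi> x \<partial>interval_measure F) =
       infsum (\<lambda>x. \<phi> x * measure (interval_measure F) {x}) {a<..b}"
proof -
  let ?I = "{a<..b}" and ?M = "interval_measure F"
  have C: "0 \<le> F b - F a" using distribution_function_mono[OF assms(1)] by simp
  have atom_le: "\<bar>measure ?M {x}\<bar> \<le> F b - F a" if "x \<in> ?I" for x
    using distribution_function_measure_subset_Ioc(2)[OF assms(1), of "{x}"] that by simp
  show "(\<lambda>x. \<phi> x * measure ?M {x}) summable_on ?I"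
    using summable_on_mult_bounded[OF assms(2) atom_le] .
  have abs: "(\<lambda>x. \<bar>\<phi> x\<bar>) summable_on ?I"
    using assms(2) summable_on_iff_abs_summable_on_real[of \<phi>] by simp
  have approx: "\<exists>\<psi> c. set_borel_measurable borel ?I \<psi> \<and> (\<forall>x\<in>?I. \<bar>\<psi> x\<bar> \<le> c) \<and>
      (\<forall>x\<in>?I. \<bar>\<phi> x - \<psi> x\<bar> \<le> \<epsilon>) \<and>
      \<bar>(\<integral>x\<in>?I. \<psi> x \<partial>?M) - infsum (\<lambda>x. \<phi> x * measure ?M {x}) ?I\<bar> \<le> \<epsilon>"
    if "\<epsilon> > 0" for \<epsilon>
  proof -
    obtain A where A: "finite A" "A \<subseteq> ?I" and tail: "infsum (\<lambda>x. \<bar>\<phi> x\<bar>) (?I - A) \<le> \<epsilon>"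
      "infsum (\<lambda>x. \<bar>\<phi> x\<bar>) (?I - A) * (F b - F a) \<le> \<epsilon>"
      using summable_on_small_abs_tail[OF assms(2) \<open>\<epsilon> > 0\<close> C] by blast
    have "\<bar>\<phi> x * indicator A x\<bar> \<le> infsum (\<lambda>x. \<bar>\<phi> x\<bar>) ?I" if "x \<in> ?I" for x
      using abs_le_infsum_abs[OF abs that] by (auto simp: indicator_def)
    moreover have "\<bar>\<phi> x - \<phi> x * indicator A x\<bar> \<le> \<epsilon>" if "x \<in> ?I" for x
    proof (cases "x \<in> A")
      case False
      then have "\<bar>\<phi> x\<bar> \<le> infsum (\<lambda>x. \<bar>\<phi> x\<bar>) (?I - A)"
        using that by (intro abs_le_infsum_abs[OF summable_on_subset_banach[OF abs Diff_subset]]) auto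
      then show ?thesis using False tail(1) by simp
    qed (use \<open>\<epsilon> > 0\<close> in simp)
    moreover have "\<bar>(\<integral>x\<in>?I. \<phi> x * indicator A x \<partial>?M) - infsum (\<lambda>x. \<phi> x * measure ?M {x}) ?I\<bar> \<le> \<epsilon>"
      using infsum_mult_bounded_minus_sum[OF assms(2) A, of "\<lambda>x. measure ?M {x}", OF atom_le] tail(2)
      unfolding set_integral_Ioc_finite_support(2)[OF assms(1) A] abs_le_iff by linarith
    ultimately show ?thesis using set_integral_Ioc_finite_support(1)[OF assms(1) A]
      by (intro exI[of _ "\<lambda>x. \<phi> x * indicator A x"] exI[of _ "infsum (\<lambda>x. \<bar>\<phi> x\<bar>) ?I"] conjI ballI)
         simp_all
  qed
  show "set_integrable ?M ?I \<phi>"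
    by (rule set_integral_Ioc_uniform_approx(1)[OF assms(1)]) (rule approx)
  show "(\<integral>x\<in>?I. \<phi> x \<partial>?M) = infsum (\<lambda>x. \<phi> x * measure ?M {x}) ?I"
    by (rule set_integral_Ioc_uniform_approx(2)[OF assms(1)]) (rule approx)
qed

lemma set_integral_Ioc_partial_sums:
  fixes d :: "real \<Rightarrow> real"
  assumes "a \<le> b" "d summable_on {a..<b}"
  shows "set_integrable (interval_measure F) {a<..b} (\<lambda>x. infsum d {a..<x})"
    "(\<integral>x\<in>{a<..b}. infsum d {a..<x} \<partial>interval_measure F) = infsum (\<lambda>u. d u * (F b - F u)) {a..<b}"
proof -
  let ?S = "{a..<b}" and ?I = "{a<..b}" and ?M = "interval_measure F"
  have C: "0 \<le> F b - F a" using distribution_function_mono[OF assms(1)] by simp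
  have F_le: "\<bar>F b - F u\<bar> \<le> F b - F a" if "u \<in> ?S" for u
    using distribution_function_mono[of a u] distribution_function_mono[of u b] that by auto
  have approx: "\<exists>\<psi> c. set_borel_measurable borel ?I \<psi> \<and> (\<forall>x\<in>?I. \<bar>\<psi> x\<bar> \<le> c) \<and>
      (\<forall>x\<in>?I. \<bar>infsum d {a..<x} - \<psi> x\<bar> \<le> \<epsilon>) \<and>
      \<bar>(\<integral>x\<in>?I. \<psi> x \<partial>?M) - infsum (\<lambda>u. d u * (F b - F u)) ?S\<bar> \<le> \<epsilon>"
    if "\<epsilon> > 0" for \<epsilon>
  proof -
    obtain A where A: "finite A" "A \<subseteq> ?S" and tail: "infsum (\<lambda>u. \<bar>d u\<bar>) (?S - A) \<le> \<epsilon>"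
      "infsum (\<lambda>u. \<bar>d u\<bar>) (?S - A) * (F b - F a) \<le> \<epsilon>"
      using summable_on_small_abs_tail[OF assms(2) \<open>\<epsilon> > 0\<close> C] by blast
    define \<psi> where "\<psi> x = (\<Sum>u\<in>A. d u * indicator {u<..b} x)" for x
    have "\<bar>\<psi> x\<bar> \<le> (\<Sum>u\<in>A. \<bar>d u\<bar>)" for x
      unfolding \<psi>_def
      by (rule order_trans[OF sum_abs]) (auto intro!: sum_mono simp: abs_mult indicator_def)
    moreover have "\<bar>infsum d {a..<x} - \<psi> x\<bar> \<le> \<epsilon>" if x: "x \<in> ?I" for x
    proof -
      have "\<psi> x = sum d (A \<inter> {u. u < x})"
        using x A unfolding \<psi>_def
        by (simp add: sum.inter_filter[symmetric] indicator_def if_distrib[of "\<lambda>v. _ * v"] cong: if_cong)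
      moreover have "d summable_on {a..<x}"
        using summable_on_subset_banach[OF assms(2)] x by auto
      moreover have "A \<inter> {u. u < x} \<subseteq> {a..<x}" using A(2) by auto
      ultimately have "infsum d {a..<x} - \<psi> x = infsum d ({a..<x} - A \<inter> {u. u < x})"
        using infsum_Diff_finite[of d "{a..<x}" "A \<inter> {u. u < x}"] A(1) by auto
      also have "{a..<x} - A \<inter> {u. u < x} = {a..<x} - A" by auto
      finally have "infsum d {a..<x} - \<psi> x = infsum d ({a..<x} - A)" .
      moreover have "\<bar>infsum d ({a..<x} - A)\<bar> \<le> infsum (\<lambda>u. \<bar>d u\<bar>) (?S - A)"
        by (rule abs_infsum_le_infsum_abs[OF summable_on_subset_banach[OF assms(2) Diff_subset]])
           (use x in auto)
      ultimately show ?thesis using tail(1) by simp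
    qed
    moreover have "\<bar>(\<integral>x\<in>?I. \<psi> x \<partial>?M) - infsum (\<lambda>u. d u * (F b - F u)) ?S\<bar> \<le> \<epsilon>"
      using infsum_mult_bounded_minus_sum[OF assms(2) A, of "\<lambda>u. F b - F u", OF F_le] tail(2)
      unfolding \<psi>_def set_integral_Ioc_finite_steps(2)[OF assms(1) A] abs_le_iff by linarith
    ultimately show ?thesis using set_integral_Ioc_finite_steps(1)[OF assms(1) A, of d]
      by (intro exI[of _ "\<lambda>x. \<Sum>u\<in>A. d u * indicator {u<..b} x"] exI[of _ "\<Sum>u\<in>A. \<bar>d u\<bar>"]
          conjI ballI) (simp_all add: \<psi>_def)
  qed
  show "set_integrable ?M ?I (\<lambda>x. infsum d {a..<x})"
    by (rule set_integral_Ioc_uniform_approx(1)[OF assms(1)]) (rule approx)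
  show "(\<integral>x\<in>?I. infsum d {a..<x} \<partial>?M) = infsum (\<lambda>u. d u * (F b - F u)) ?S"
    by (rule set_integral_Ioc_uniform_approx(2)[OF assms(1)]) (rule approx)
qed

end

section \<open>Dyadic Riemann sums\<close>

definition dyadic_point :: "real \<Rightarrow> nat \<Rightarrow> nat \<Rightarrow> real" where
  "dyadic_point t n k = t * real k / 2 ^ n"

definition dyadic_step :: "(nat \<Rightarrow> real) \<Rightarrow> real \<Rightarrow> nat \<Rightarrow> real \<Rightarrow> real" where
  "dyadic_step c t n x = (\<Sum>k<2 ^ n. c k * indicator {dyadic_point t n k<..dyadic_point t n (Suc k)} x)"

definition dyadic_index :: "real \<Rightarrow> nat \<Rightarrow> real \<Rightarrow> nat" where
  "dyadic_index t n x = nat (\<lceil>x * 2 ^ n / t\<rceil> - 1)"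

lemma dyadic_point_simps:
  "dyadic_point t n 0 = 0" "dyadic_point t n (2 ^ n) = t"
  "dyadic_point t n (Suc k) = dyadic_point t n k + t / 2 ^ n"
  unfolding dyadic_point_def by (simp_all add: field_simps)

lemma dyadic_point_mono: "0 \<le> t \<Longrightarrow> j \<le> k \<Longrightarrow> dyadic_point t n j \<le> dyadic_point t n k"
  unfolding dyadic_point_def by (intro divide_right_mono mult_left_mono) auto

lemma dyadic_point_bounds: "0 \<le> t \<Longrightarrow> k \<le> 2 ^ n \<Longrightarrow> 0 \<le> dyadic_point t n k \<and> dyadic_point t n k \<le> t"
  using dyadic_point_mono[of t 0 k n] dyadic_point_mono[of t k "2 ^ n" n] by (simp add: dyadic_point_simps)

lemma mem_dyadic_interval_iff:
  assumes "t > 0"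
  shows "x \<in> {dyadic_point t n k<..dyadic_point t n (Suc k)} \<longleftrightarrow> \<lceil>x * 2 ^ n / t\<rceil> = int k + 1"
proof -
  have "x \<in> {dyadic_point t n k<..dyadic_point t n (Suc k)} \<longleftrightarrow>
      real k < x * 2 ^ n / t \<and> x * 2 ^ n / t \<le> real k + 1"
    unfolding dyadic_point_def using assms by (auto simp: field_simps)
  then show ?thesis unfolding ceiling_eq_iff by simp
qed

lemma dyadic_index:
  assumes "t > 0" "x \<in> {0<..t}"
  shows "dyadic_index t n x < 2 ^ n"
    "x \<in> {dyadic_point t n (dyadic_index t n x)<..dyadic_point t n (Suc (dyadic_index t n x))}"
proof -
  have "0 < x * 2 ^ n / t" "x * 2 ^ n / t \<le> 2 ^ n" using assms by (auto simp: field_simps)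
  then have c: "1 \<le> \<lceil>x * 2 ^ n / t\<rceil>" "\<lceil>x * 2 ^ n / t\<rceil> \<le> 2 ^ n"
    by (simp_all add: le_ceiling_iff ceiling_le_iff)
  then show "dyadic_index t n x < 2 ^ n"
    unfolding dyadic_index_def by (simp add: nat_less_iff)
  from c have "\<lceil>x * 2 ^ n / t\<rceil> = int (dyadic_index t n x) + 1"
    unfolding dyadic_index_def by linarith
  then show "x \<in> {dyadic_point t n (dyadic_index t n x)<..dyadic_point t n (Suc (dyadic_index t n x))}"
    using mem_dyadic_interval_iff[OF assms(1)] by blast
qed

lemma dyadic_step_eval:
  assumes "t > 0" "x \<in> {0<..t}"
  shows "dyadic_step c t n x = c (dyadic_index t n x)"
proof -
  have "indicator {dyadic_point t n k<..dyadic_point t n (Suc k)} x = (if k = dyadic_index t n x then 1 else 0 :: real)"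
    for k
    using dyadic_index(2)[OF assms, of n] mem_dyadic_interval_iff[OF assms(1), of x n]
    by (auto simp: indicator_def)
  then show ?thesis
    unfolding dyadic_step_def using dyadic_index(1)[OF assms]
    by (simp add: if_distrib[of "\<lambda>v. _ * v"] cong: if_cong)
qed

lemma dyadic_step_outside:
  assumes "0 \<le> t" "x \<notin> {0<..t}"
  shows "dyadic_step c t n x = 0"
proof -
  have "indicator {dyadic_point t n k<..dyadic_point t n (Suc k)} x = (0::real)" if "k < 2 ^ n" for k
    using dyadic_point_bounds[OF assms(1), of k n] dyadic_point_bounds[OF assms(1), of "Suc k" n]
      that assms(2) by (auto simp: indicator_def)
  then show ?thesis unfolding dyadic_step_def by simp
qed

lemma dyadic_step_measurable [measurable]: "dyadic_step c t n \<in> borel_measurable borel"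
  unfolding dyadic_step_def by measurable

lemma tendsto_dyadic_point_right:
  fixes m :: "real \<Rightarrow> real"
  assumes "t > 0" "x \<in> {0<..t}" "x < t \<Longrightarrow> (m \<longlongrightarrow> m x) (at_right x)"
  shows "(\<lambda>n. m (dyadic_point t n (Suc (dyadic_index t n x)))) \<longlonglongrightarrow> m x"
proof -
  let ?y = "\<lambda>n. dyadic_point t n (Suc (dyadic_index t n x))"
  have y: "x \<le> ?y n" "?y n < x + t / 2 ^ n" "?y n \<le> t" for n
    using dyadic_index[OF assms(1,2), of n] dyadic_point_bounds[of t "Suc (dyadic_index t n x)" n]
      assms(1) by (auto simp: dyadic_point_simps)
  show ?thesis
  proof (cases "x = t")
    case True
    then have "?y n = x" for n using y(1,3)[of n] by (intro antisym) auto
    then show ?thesis by simp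
  next
    case False
    show ?thesis
    proof (rule tendstoI)
      fix \<epsilon> :: real assume e: "\<epsilon> > 0"
      obtain b where b: "b > x" "\<And>y. x < y \<Longrightarrow> y < b \<Longrightarrow> dist (m y) (m x) < \<epsilon>"
        using tendstoD[OF assms(3) e] False assms(2) unfolding eventually_at_right_field by auto
      have "eventually (\<lambda>n. t / 2 ^ n < b - x) sequentially"
        using LIMSEQ_divide_realpow_zero[of 2 t] b(1) by (intro order_tendstoD(2)) auto
      then show "eventually (\<lambda>n. dist (m (?y n)) (m x) < \<epsilon>) sequentially"
      proof (rule eventually_mono)
        fix n assume "t / 2 ^ n < b - x"
        then show "dist (m (?y n)) (m x) < \<epsilon>"
          using b(2)[of "?y n"] y(1,2)[of n] e by (cases "x = ?y n") auto
      qed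
    qed
  qed
qed

lemma tendsto_dyadic_point_left:
  fixes m :: "real \<Rightarrow> real"
  assumes "t > 0" "x \<in> {0<..t}" "(m \<longlongrightarrow> l) (at_left x)"
  shows "(\<lambda>n. m (dyadic_point t n (dyadic_index t n x))) \<longlonglongrightarrow> l"
proof -
  let ?y = "\<lambda>n. dyadic_point t n (dyadic_index t n x)"
  have below: "?y n < x" for n
    using dyadic_index(2)[OF assms(1,2), of n] by simp
  have close: "x - t / 2 ^ n \<le> ?y n" for n
    using dyadic_index(2)[OF assms(1,2), of n] dyadic_point_simps(3)[of t n "dyadic_index t n x"]
    by simp
  have lim: "(\<lambda>n. x - t / 2 ^ n) \<longlonglongrightarrow> x"
    using tendsto_diff[OF tendsto_const LIMSEQ_divide_realpow_zero[of 2 t]] by simp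
  have "?y \<longlonglongrightarrow> x"
    by (rule real_tendsto_sandwich[OF _ _ lim tendsto_const])
       (intro always_eventually allI close less_imp_le[OF below])+
  then have "filterlim ?y (at_left x) sequentially"
    by (rule tendsto_imp_filterlim_at_left) (intro always_eventually allI below)
  from filterlim_compose[OF assms(3) this] show ?thesis .
qed

context
  fixes F :: "real \<Rightarrow> real"
  assumes F: "distribution_function F"
begin

lemma integral_dyadic_step:
  assumes "0 \<le> t"
  shows "integrable (interval_measure F) (dyadic_step c t n)"
    "(\<integral>x. dyadic_step c t n x \<partial>interval_measure F) =
       (\<Sum>k<2 ^ n. c k * (F (dyadic_point t n (Suc k)) - F (dyadic_point t n k)))"
proof -
  have mono: "dyadic_point t n k \<le> dyadic_point t n (Suc k)" for k
    using dyadic_point_mono[OF assms] by simp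
  have int: "integrable (interval_measure F)
      (\<lambda>x. c k * indicator {dyadic_point t n k<..dyadic_point t n (Suc k)} x)" for k
    using distribution_function_emeasure_Ioc[OF F mono]
    by (intro integrable_mult_right integrable_real_indicator) auto
  then show "integrable (interval_measure F) (dyadic_step c t n)"
    unfolding dyadic_step_def by (intro Bochner_Integration.integrable_sum)
  from int show "(\<integral>x. dyadic_step c t n x \<partial>interval_measure F) =
       (\<Sum>k<2 ^ n. c k * (F (dyadic_point t n (Suc k)) - F (dyadic_point t n k)))"
    unfolding dyadic_step_def
    by (subst Bochner_Integration.integral_sum) (auto simp: distribution_function_measure_Ioc[OF F mono])
qed

lemma tendsto_integral_dyadic_steps:
  fixes m ml :: "real \<Rightarrow> real"
  assumes "t > 0"
    and bounded: "\<And>x. 0 \<le> x \<Longrightarrow> x \<le> t \<Longrightarrow> \<bar>m x\<bar> \<le> B"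
    and right: "\<And>s. 0 \<le> s \<Longrightarrow> s < t \<Longrightarrow> (m \<longlongrightarrow> m s) (at_right s)"
    and left: "\<And>s. 0 < s \<Longrightarrow> s \<le> t \<Longrightarrow> (m \<longlongrightarrow> ml s) (at_left s)"
  shows "set_integrable (interval_measure F) {0<..t} m" "set_integrable (interval_measure F) {0<..t} ml"
    "(\<lambda>n. \<integral>x. dyadic_step (\<lambda>k. m (dyadic_point t n (Suc k))) t n x \<partial>interval_measure F)
       \<longlonglongrightarrow> (\<integral>x\<in>{0<..t}. m x \<partial>interval_measure F)"
    "(\<lambda>n. \<integral>x. dyadic_step (\<lambda>k. m (dyadic_point t n k)) t n x \<partial>interval_measure F)
       \<longlonglongrightarrow> (\<integral>x\<in>{0<..t}. ml x \<partial>interval_measure F)"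
proof -
  let ?I = "{0<..t}" and ?x = "dyadic_point t"
  define R where "R n = dyadic_step (\<lambda>k. m (?x n (Suc k))) t n" for n
  define L where "L n = dyadic_step (\<lambda>k. m (?x n k)) t n" for n
  have step_bound: "\<bar>dyadic_step (\<lambda>k. m (?x n (j k))) t n x\<bar> \<le> B * indicator ?I x"
    if "\<And>k. k < 2 ^ n \<Longrightarrow> j k \<le> 2 ^ n" for j n x
  proof (cases "x \<in> ?I")
    case True
    then show ?thesis
      using dyadic_step_eval[OF \<open>t > 0\<close> True] dyadic_index(1)[OF \<open>t > 0\<close> True, of n]
        that[of "dyadic_index t n x"] bounded dyadic_point_bounds[of t] \<open>t > 0\<close> by simp
  qed (use dyadic_step_outside \<open>t > 0\<close> in simp)
  have meas: "R n \<in> borel_measurable borel" "L n \<in> borel_measurable borel" for n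
    unfolding R_def L_def by (rule dyadic_step_measurable)+
  have R_bound: "\<bar>R n x\<bar> \<le> B * indicator ?I x" and L_bound: "\<bar>L n x\<bar> \<le> B * indicator ?I x" for n x
    unfolding R_def L_def by (rule step_bound, simp)+
  have R_lim: "(\<lambda>n. R n x) \<longlonglongrightarrow> m x" if "x \<in> ?I" for x
    unfolding R_def dyadic_step_eval[OF \<open>t > 0\<close> that]
    using that right by (intro tendsto_dyadic_point_right[OF \<open>t > 0\<close>]) auto
  have L_lim: "(\<lambda>n. L n x) \<longlonglongrightarrow> ml x" if "x \<in> ?I" for x
    unfolding L_def dyadic_step_eval[OF \<open>t > 0\<close> that]
    using that left by (intro tendsto_dyadic_point_left[OF \<open>t > 0\<close>]) auto
  show "set_integrable (interval_measure F) ?I m" "set_integrable (interval_measure F) ?I ml"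
    "(\<lambda>n. \<integral>x. dyadic_step (\<lambda>k. m (?x n (Suc k))) t n x \<partial>interval_measure F)
       \<longlonglongrightarrow> (\<integral>x\<in>?I. m x \<partial>interval_measure F)"
    "(\<lambda>n. \<integral>x. dyadic_step (\<lambda>k. m (?x n k)) t n x \<partial>interval_measure F)
       \<longlonglongrightarrow> (\<integral>x\<in>?I. ml x \<partial>interval_measure F)"
    using set_integral_bounded_convergence[OF F _ meas(1) R_bound R_lim]
      set_integral_bounded_convergence[OF F _ meas(2) L_bound L_lim] \<open>t > 0\<close>
    unfolding R_def L_def by simp_all
qed

end

text \<open>On each dyadic interval \<open>]x,x']\<close> the summand is \<open>(m x' + m x) (m x' - m x) = (m x')\<^sup>2 - (m x)\<^sup>2\<close>,
  so the sum telescopes.\<close>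
lemma dyadic_riemann_sums_telescope:
  fixes m :: "real \<Rightarrow> real"
  assumes F1: "distribution_function F1" and F2: "distribution_function F2" and "0 \<le> t"
    and diff: "\<And>a b. 0 \<le> a \<Longrightarrow> a \<le> b \<Longrightarrow> b \<le> t \<Longrightarrow> (F1 b - F1 a) - (F2 b - F2 a) = m b - m a"
  shows "((\<integral>x. dyadic_step (\<lambda>k. m (dyadic_point t n (Suc k))) t n x \<partial>interval_measure F1)
        - (\<integral>x. dyadic_step (\<lambda>k. m (dyadic_point t n (Suc k))) t n x \<partial>interval_measure F2))
      + ((\<integral>x. dyadic_step (\<lambda>k. m (dyadic_point t n k)) t n x \<partial>interval_measure F1)
        - (\<integral>x. dyadic_step (\<lambda>k. m (dyadic_point t n k)) t n x \<partial>interval_measure F2))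
    = (m t)\<^sup>2 - (m 0)\<^sup>2"
proof -
  let ?x = "dyadic_point t"
  let ?\<Delta> = "\<lambda>F k. F (?x n (Suc k)) - F (?x n k)"
  have \<Delta>: "?\<Delta> F1 k - ?\<Delta> F2 k = m (?x n (Suc k)) - m (?x n k)" if "k < 2 ^ n" for k
    using diff dyadic_point_bounds[OF \<open>0 \<le> t\<close>, of "Suc k" n] dyadic_point_bounds[OF \<open>0 \<le> t\<close>, of k n]
      dyadic_point_mono[OF \<open>0 \<le> t\<close>, of k "Suc k" n] that by simp
  have sq: "(m (?x n (Suc k)) + m (?x n k)) * (?\<Delta> F1 k - ?\<Delta> F2 k)
      = (m (?x n (Suc k)))\<^sup>2 - (m (?x n k))\<^sup>2" if "k < 2 ^ n" for k
    unfolding \<Delta>[OF that] by (simp add: power2_eq_square algebra_simps)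
  have "((\<integral>x. dyadic_step (\<lambda>k. m (?x n (Suc k))) t n x \<partial>interval_measure F1)
        - (\<integral>x. dyadic_step (\<lambda>k. m (?x n (Suc k))) t n x \<partial>interval_measure F2))
      + ((\<integral>x. dyadic_step (\<lambda>k. m (?x n k)) t n x \<partial>interval_measure F1)
        - (\<integral>x. dyadic_step (\<lambda>k. m (?x n k)) t n x \<partial>interval_measure F2))
    = (\<Sum>k<2 ^ n. m (?x n (Suc k)) * ?\<Delta> F1 k) - (\<Sum>k<2 ^ n. m (?x n (Suc k)) * ?\<Delta> F2 k)
      + ((\<Sum>k<2 ^ n. m (?x n k) * ?\<Delta> F1 k) - (\<Sum>k<2 ^ n. m (?x n k) * ?\<Delta> F2 k))"
    by (simp add: integral_dyadic_step[OF F1 \<open>0 \<le> t\<close>] integral_dyadic_step[OF F2 \<open>0 \<le> t\<close>])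
  also have "\<dots> = (\<Sum>k<2 ^ n. (m (?x n (Suc k)) + m (?x n k)) * (?\<Delta> F1 k - ?\<Delta> F2 k))"
    by (simp add: sum_subtractf[symmetric] sum.distrib[symmetric] algebra_simps)
  also have "\<dots> = (\<Sum>k<2 ^ n. (m (?x n (Suc k)))\<^sup>2 - (m (?x n k))\<^sup>2)"
    by (intro sum.cong refl) (simp add: sq)
  also have "\<dots> = (m t)\<^sup>2 - (m 0)\<^sup>2"
    using sum_lessThan_telescope[of "\<lambda>k. (m (?x n k))\<^sup>2" "2 ^ n"]
    by (simp add: dyadic_point_simps(1,2))
  finally show ?thesis .
qed

lemma set_integral_plus_left_lim_eq_square_diff:
  fixes m ml :: "real \<Rightarrow> real"
  assumes F1: "distribution_function F1" and F2: "distribution_function F2" and "t > 0"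
    and diff: "\<And>a b. 0 \<le> a \<Longrightarrow> a \<le> b \<Longrightarrow> b \<le> t \<Longrightarrow> (F1 b - F1 a) - (F2 b - F2 a) = m b - m a"
    and bounded: "\<And>x. 0 \<le> x \<Longrightarrow> x \<le> t \<Longrightarrow> \<bar>m x\<bar> \<le> B"
    and right: "\<And>s. 0 \<le> s \<Longrightarrow> s < t \<Longrightarrow> (m \<longlongrightarrow> m s) (at_right s)"
    and left: "\<And>s. 0 < s \<Longrightarrow> s \<le> t \<Longrightarrow> (m \<longlongrightarrow> ml s) (at_left s)"
  shows "set_integrable (interval_measure F1) {0<..t} m" "set_integrable (interval_measure F2) {0<..t} m"
    "set_integrable (interval_measure F1) {0<..t} ml" "set_integrable (interval_measure F2) {0<..t} ml"
    "(\<integral>x\<in>{0<..t}. m x + ml x \<partial>interval_measure F1) - (\<integral>x\<in>{0<..t}. m x + ml x \<partial>interval_measure F2)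
       = (m t)\<^sup>2 - (m 0)\<^sup>2"
proof -
  have b: "\<bar>m x\<bar> \<le> B" if "0 \<le> x" "x \<le> t" for x using bounded that .
  have r: "(m \<longlongrightarrow> m s) (at_right s)" if "0 \<le> s" "s < t" for s using right that .
  have l: "(m \<longlongrightarrow> ml s) (at_left s)" if "0 < s" "s \<le> t" for s using left that .
  note lim1 = tendsto_integral_dyadic_steps[OF F1 \<open>t > 0\<close> b r l]
    and lim2 = tendsto_integral_dyadic_steps[OF F2 \<open>t > 0\<close> b r l]
  show "set_integrable (interval_measure F1) {0<..t} m" "set_integrable (interval_measure F2) {0<..t} m"
    "set_integrable (interval_measure F1) {0<..t} ml" "set_integrable (interval_measure F2) {0<..t} ml"
    using lim1(1,2) lim2(1,2) by simp_all
  let ?R = "\<lambda>F n. \<integral>x. dyadic_step (\<lambda>k. m (dyadic_point t n (Suc k))) t n x \<partial>interval_measure F"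
  let ?L = "\<lambda>F n. \<integral>x. dyadic_step (\<lambda>k. m (dyadic_point t n k)) t n x \<partial>interval_measure F"
  let ?int = "\<lambda>F h. \<integral>x\<in>{0<..t}. h x \<partial>interval_measure F"
  have "(?R F1 n - ?R F2 n) + (?L F1 n - ?L F2 n) = (m t)\<^sup>2 - (m 0)\<^sup>2" for n
    using diff by (rule dyadic_riemann_sums_telescope[OF F1 F2 less_imp_le[OF \<open>t > 0\<close>]])
  moreover have "(\<lambda>n. (?R F1 n - ?R F2 n) + (?L F1 n - ?L F2 n))
      \<longlonglongrightarrow> (?int F1 m - ?int F2 m) + (?int F1 ml - ?int F2 ml)"
    by (intro tendsto_add tendsto_diff lim1(3,4) lim2(3,4))
  ultimately have "(?int F1 m - ?int F2 m) + (?int F1 ml - ?int F2 ml) = (m t)\<^sup>2 - (m 0)\<^sup>2"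
    by (simp add: LIMSEQ_const_iff)
  then show "?int F1 (\<lambda>x. m x + ml x) - ?int F2 (\<lambda>x. m x + ml x) = (m t)\<^sup>2 - (m 0)\<^sup>2"
    using lim1(1,2) lim2(1,2) by (simp add: set_integral_add)
qed

section \<open>Stieltjes integrals against a right-continuous path\<close>

definition stieltjes_integrable :: "(real \<Rightarrow> real) \<Rightarrow> (real \<Rightarrow> real) \<Rightarrow> real \<Rightarrow> real \<Rightarrow> bool" where
  "stieltjes_integrable g h a b \<longleftrightarrow>
     set_integrable (interval_measure (variation_function g)) {a<..b} h \<and>
     set_integrable (interval_measure (variation_excess g)) {a<..b} h"

lemma stieltjes_Ioc_add:
  assumes "stieltjes_integrable g h1 a b" "stieltjes_integrable g h2 a b"
  shows "stieltjes_integrable g (\<lambda>x. h1 x + h2 x) a b"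
    "stieltjes_Ioc g (\<lambda>x. h1 x + h2 x) a b = stieltjes_Ioc g h1 a b + stieltjes_Ioc g h2 a b"
  using assms unfolding stieltjes_integrable_def stieltjes_Ioc_altdef by (simp_all add: set_integral_add)

lemma stieltjes_Ioc_mult:
  "stieltjes_Ioc g (\<lambda>x. c * h x) a b = c * stieltjes_Ioc g h a b"
  unfolding stieltjes_Ioc_altdef by (simp add: right_diff_distrib)

lemma stieltjes_integrable_mult:
  "stieltjes_integrable g h a b \<Longrightarrow> stieltjes_integrable g (\<lambda>x. c * h x) a b"
  unfolding stieltjes_integrable_def by auto

lemma stieltjes_Ioc_cong:
  assumes "\<And>x. x \<in> {a<..b} \<Longrightarrow> h x = h' x"
  shows "stieltjes_Ioc g h a b = stieltjes_Ioc g h' a b"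
proof -
  have "(\<integral>x\<in>{a<..b}. h x \<partial>interval_measure F) = (\<integral>x\<in>{a<..b}. h' x \<partial>interval_measure F)" for F
    using assms by (intro set_lebesgue_integral_cong) auto
  then show ?thesis unfolding stieltjes_Ioc_altdef by simp
qed

context
  fixes g :: "real \<Rightarrow> real"
  assumes bv: "bv_path g" and right_cont: "\<And>s. 0 \<le> s \<Longrightarrow> continuous (at_right s) g"
begin

lemma distribution_functions_jordan:
  "distribution_function (variation_function g)" "distribution_function (variation_excess g)"
proof -
  show "distribution_function (variation_function g)"
    by (rule distribution_function_variation_function[OF bv]) (rule right_cont)
  show "distribution_function (variation_excess g)"
    by (rule distribution_function_variation_excess[OF bv]) (rule right_cont)
qed

lemma stieltjes_Ioc_plus_left_lim:
  assumes "regulated_path g" "t > 0"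
  shows "stieltjes_integrable g g 0 t" "stieltjes_integrable g (left_lim g) 0 t"
    "stieltjes_Ioc g (\<lambda>x. g x + left_lim g x) 0 t = (g t)\<^sup>2 - (g 0)\<^sup>2"
proof -
  have diff: "(variation_function g b - variation_function g a) - (variation_excess g b - variation_excess g a)
      = g b - g a" if "0 \<le> a" "a \<le> b" "b \<le> t" for a b
    using variation_function_diff_excess[OF that(1,2)] .
  have bounded: "\<bar>g x\<bar> \<le> \<bar>g 0\<bar> + variation g 0 t" if "0 \<le> x" "x \<le> t" for x
    using bv_path_bounded[OF bv that] .
  have right: "(g \<longlongrightarrow> g s) (at_right s)" if "0 \<le> s" "s < t" for s
    using right_cont[OF that(1)] unfolding continuous_within .
  have left: "(g \<longlongrightarrow> left_lim g s) (at_left s)" if "0 < s" "s \<le> t" for s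
    using tendsto_left_lim[OF assms(1) that(1)] .
  note Riemann = set_integral_plus_left_lim_eq_square_diff[OF distribution_functions_jordan assms(2)
      diff bounded right left]
  show "stieltjes_integrable g g 0 t" "stieltjes_integrable g (left_lim g) 0 t"
    unfolding stieltjes_integrable_def using Riemann(1-4) by blast+
  show "stieltjes_Ioc g (\<lambda>x. g x + left_lim g x) 0 t = (g t)\<^sup>2 - (g 0)\<^sup>2"
    unfolding stieltjes_Ioc_altdef by (rule Riemann(5))
qed

text \<open>Let \<open>y \<nearrow> s\<close> in \<open>\<mu>\<^sub>V ]y,s] - \<mu>\<^sub>W ]y,s] = g s - g y\<close>.\<close>
lemma measure_singleton_jordan_diff:
  assumes "regulated_path g" "0 < s"
  shows "measure (interval_measure (variation_function g)) {s} - measure (interval_measure (variation_excess g)) {s}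
    = g s - left_lim g s"
proof -
  let ?V = "variation_function g" and ?W = "variation_excess g"
  let ?y = "\<lambda>n. s - inverse (real (Suc n))"
  have lim: "(\<lambda>n. (?V s - ?V (?y n)) - (?W s - ?W (?y n))) \<longlonglongrightarrow>
      measure (interval_measure ?V) {s} - measure (interval_measure ?W) {s}"
    by (intro tendsto_diff tendsto_measure_singleton distribution_functions_jordan)
  have ev: "eventually (\<lambda>n. (?V s - ?V (?y n)) - (?W s - ?W (?y n)) = g s - g (?y n)) sequentially"
    using order_tendstoD(2)[OF LIMSEQ_inverse_real_of_nat assms(2)]
    by eventually_elim (rule variation_function_diff_excess, auto)
  have "(\<lambda>n. g s - g (?y n)) \<longlonglongrightarrow> g s - left_lim g s"
  proof (intro tendsto_diff tendsto_const filterlim_compose[OF tendsto_left_lim[OF assms]])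
    have "?y \<longlonglongrightarrow> s - 0" by (intro tendsto_diff tendsto_const LIMSEQ_inverse_real_of_nat)
    then show "filterlim ?y (at_left s) sequentially"
      by (intro tendsto_imp_filterlim_at_left) (auto intro: always_eventually)
  qed
  then have "(\<lambda>n. (?V s - ?V (?y n)) - (?W s - ?W (?y n))) \<longlonglongrightarrow> g s - left_lim g s"
    using tendsto_cong[OF ev] by simp
  with lim show ?thesis by (rule LIMSEQ_unique)
qed

lemma stieltjes_Ioc_summable:
  assumes "regulated_path g" "0 \<le> a" "a \<le> b" "\<phi> summable_on {a<..b}"
  shows "stieltjes_integrable g \<phi> a b"
    "stieltjes_Ioc g \<phi> a b = infsum (\<lambda>s. \<phi> s * (g s - left_lim g s)) {a<..b}"
proof -
  let ?V = "interval_measure (variation_function g)" and ?W = "interval_measure (variation_excess g)"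
  note V = set_integral_Ioc_summable[OF distribution_functions_jordan(1) assms(3,4)]
  note W = set_integral_Ioc_summable[OF distribution_functions_jordan(2) assms(3,4)]
  show "stieltjes_integrable g \<phi> a b" unfolding stieltjes_integrable_def using V W by blast
  have "stieltjes_Ioc g \<phi> a b = infsum (\<lambda>s. \<phi> s * measure ?V {s} - \<phi> s * measure ?W {s}) {a<..b}"
    unfolding stieltjes_Ioc_altdef V(3) W(3) using infsum_diff[OF V(2) W(2)] by simp
  also have "\<dots> = infsum (\<lambda>s. \<phi> s * (g s - left_lim g s)) {a<..b}"
    using measure_singleton_jordan_diff[OF assms(1)] assms(2)
    by (intro infsum_cong) (auto simp flip: right_diff_distrib)
  finally show "stieltjes_Ioc g \<phi> a b = infsum (\<lambda>s. \<phi> s * (g s - left_lim g s)) {a<..b}" .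
qed

lemma stieltjes_Ioc_partial_sums:
  assumes "0 \<le> a" "a \<le> b" "d summable_on {a..<b}"
  shows "stieltjes_integrable g (\<lambda>x. infsum d {a..<x}) a b"
    "stieltjes_Ioc g (\<lambda>x. infsum d {a..<x}) a b = infsum (\<lambda>u. d u * (g b - g u)) {a..<b}"
proof -
  let ?V = "variation_function g" and ?W = "variation_excess g"
  note V = set_integral_Ioc_partial_sums[OF distribution_functions_jordan(1) assms(2,3)]
  note W = set_integral_Ioc_partial_sums[OF distribution_functions_jordan(2) assms(2,3)]
  show "stieltjes_integrable g (\<lambda>x. infsum d {a..<x}) a b" unfolding stieltjes_integrable_def using V W by blast
  have bounded: "\<bar>F b - F u\<bar> \<le> \<bar>F b\<bar> + \<bar>F a\<bar> + \<bar>F b - F a\<bar>" if "distribution_function F" "u \<in> {a..<b}" for F u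
    using distribution_function_mono[OF that(1), of a u] distribution_function_mono[OF that(1), of u b] that(2)
    by auto
  have "stieltjes_Ioc g (\<lambda>x. infsum d {a..<x}) a b
      = infsum (\<lambda>u. d u * (?V b - ?V u) - d u * (?W b - ?W u)) {a..<b}"
    unfolding stieltjes_Ioc_altdef V(2) W(2)
    using infsum_diff[OF summable_on_mult_bounded[OF assms(3) bounded[OF distribution_functions_jordan(1)]]
        summable_on_mult_bounded[OF assms(3) bounded[OF distribution_functions_jordan(2)]]] by simp
  also have "\<dots> = infsum (\<lambda>u. d u * (g b - g u)) {a..<b}"
    using variation_function_diff_excess[of _ b g] assms(1)
    by (intro infsum_cong) (auto simp flip: right_diff_distrib)
  finally show "stieltjes_Ioc g (\<lambda>x. infsum d {a..<x}) a b = infsum (\<lambda>u. d u * (g b - g u)) {a..<b}" .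
qed

end

lemma stieltjes_Ioc_self_plus_right_lim:
  assumes f: "regulated_path f" "bv_path f" and "t > 0"
  shows "stieltjes_Ioc (right_cont_part f) (\<lambda>s. f s + right_lim f s) 0 t
    = (right_cont_part f t)\<^sup>2 - (right_cont_part f 0)\<^sup>2 + infsum (\<lambda>s. (f s - left_lim f s)\<^sup>2) {0<..t}
      + 2 * infsum (\<lambda>u. right_jump f u * (right_cont_part f t - right_cont_part f u)) {0..<t}
      + infsum (\<lambda>s. right_jump f s * (f s - left_lim f s)) {0<..t}"
proof -
  define g where "g = right_cont_part f"
  define J where "J = jump_part f"
  define d where "d = right_jump f"
  define e where "e s = f s - left_lim f s" for s
  let ?S = "{0..<t}" and ?I = "{0<..t}"
  have g: "regulated_path g" "bv_path g" "\<And>s. 0 \<le> s \<Longrightarrow> continuous (at_right s) g"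
    unfolding g_def using regulated_path_right_cont_part[OF f] bv_path_right_cont_part[OF f]
      continuous_right_cont_part[OF f] by auto
  have f_eq: "f s = g s + J s" for s unfolding g_def J_def right_cont_part_eq by simp
  have J_eq: "J x = infsum d {0..<x}" for x unfolding J_def d_def jump_part_def ..
  have left_jump_eq: "g s - left_lim g s = e s" if "s \<in> ?I" for s
  proof -
    have "left_lim g s = left_lim f s - J s"
      unfolding g_def J_def using left_lim_right_cont_part[OF f] that by simp
    then show ?thesis unfolding e_def using f_eq[of s] by simp
  qed
  have dS: "d summable_on ?S" unfolding d_def by (rule right_jump_summable[OF f order_refl])
  have dI: "d summable_on ?I" unfolding d_def by (rule right_jump_summable[OF f, of _ "t + 1"]) auto
  have eI: "e summable_on ?I" unfolding e_def using left_jump_summable[OF f] .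
  note plus_left = stieltjes_Ioc_plus_left_lim[OF g(2,3) g(1) \<open>t > 0\<close>]
  note jumps_e = stieltjes_Ioc_summable[OF g(2,3) g(1) order_refl less_imp_le[OF \<open>t > 0\<close>] eI]
  note jumps_d = stieltjes_Ioc_summable[OF g(2,3) g(1) order_refl less_imp_le[OF \<open>t > 0\<close>] dI]
  note partial = stieltjes_Ioc_partial_sums[OF g(2,3) order_refl less_imp_le[OF \<open>t > 0\<close>] dS]
  have J_int: "stieltjes_integrable g J 0 t" using partial(1) unfolding J_eq .
  have "stieltjes_Ioc g (\<lambda>s. f s + right_lim f s) 0 t
      = stieltjes_Ioc g (\<lambda>s. ((g s + left_lim g s) + e s) + (2 * J s + d s)) 0 t"
    using left_jump_eq
    by (intro stieltjes_Ioc_cong) (simp add: d_def right_jump_def f_eq algebra_simps)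
  also have "\<dots> = ((g t)\<^sup>2 - (g 0)\<^sup>2 + infsum (\<lambda>s. e s * e s) ?I)
      + (2 * infsum (\<lambda>u. d u * (g t - g u)) ?S + infsum (\<lambda>s. d s * e s) ?I)"
  proof -
    have "stieltjes_integrable g (\<lambda>s. g s + left_lim g s) 0 t"
      using stieltjes_Ioc_add(1)[OF plus_left(1,2)] .
    moreover have "infsum (\<lambda>s. e s * (g s - left_lim g s)) ?I = infsum (\<lambda>s. e s * e s) ?I"
      "infsum (\<lambda>s. d s * (g s - left_lim g s)) ?I = infsum (\<lambda>s. d s * e s) ?I"
      using left_jump_eq by (auto intro: infsum_cong)
    ultimately show ?thesis
      using jumps_e jumps_d partial J_int plus_left(3)
      by (simp add: stieltjes_Ioc_add stieltjes_integrable_mult stieltjes_Ioc_mult J_eq)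
  qed
  finally show ?thesis unfolding g_def d_def e_def by (simp add: power2_eq_square)
qed

lemma right_jump_products_summable:
  assumes f: "regulated_path f" "bv_path f" and "0 \<le> t"
  shows "(\<lambda>u. right_jump f u * (right_cont_part f t - right_cont_part f u)) summable_on {0..<t}"
    "(\<lambda>u. right_jump f u * right_lim f u) summable_on {0..<t}"
    "(\<lambda>u. right_jump f u * right_jump f u) summable_on {0..<t}"
proof -
  let ?S = "{0..<t}" and ?g = "right_cont_part f"
  define K where "K = infsum (\<lambda>u. \<bar>right_jump f u\<bar>) ?S"
  define G where "G = \<bar>?g 0\<bar> + variation ?g 0 t"
  have dS: "right_jump f summable_on ?S" by (rule right_jump_summable[OF f order_refl])
  have d_le: "\<bar>right_jump f u\<bar> \<le> K" if "u \<in> ?S" for u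
    unfolding K_def using abs_le_infsum_abs[OF right_jump_abs_summable[OF f] that] .
  have J_le: "\<bar>jump_part f u\<bar> \<le> K" if "u \<in> ?S" for u
    unfolding K_def jump_part_def using that by (intro abs_infsum_le_infsum_abs[OF dS]) auto
  have g_le: "\<bar>?g u\<bar> \<le> G" if "0 \<le> u" "u \<le> t" for u
    unfolding G_def using bv_path_bounded[OF bv_path_right_cont_part[OF f] that] .
  have "\<bar>?g t - ?g u\<bar> \<le> 2 * G" if "u \<in> ?S" for u
    using g_le[of t] g_le[of u] that \<open>0 \<le> t\<close> unfolding abs_le_iff by auto
  then show "(\<lambda>u. right_jump f u * (?g t - ?g u)) summable_on ?S"
    by (rule summable_on_mult_bounded[OF dS])
  have "\<bar>right_lim f u\<bar> \<le> G + 2 * K" if "u \<in> ?S" for u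
    using g_le[of u] J_le[OF that] d_le[OF that] that
    unfolding right_jump_def right_cont_part_eq abs_le_iff by auto
  then show "(\<lambda>u. right_jump f u * right_lim f u) summable_on ?S"
    by (rule summable_on_mult_bounded[OF dS])
  show "(\<lambda>u. right_jump f u * right_jump f u) summable_on ?S"
    using d_le by (rule summable_on_mult_bounded[OF dS])
qed

text \<open>Expand \<open>right_lim f = right_cont_part f + jump_part f + right_jump f\<close> and square
  \<open>jump_part f t\<close> by \<open>square_infsum_ordered\<close>.\<close>
lemma right_jump_sums_eq:
  assumes f: "regulated_path f" "bv_path f" and "0 \<le> t"
  shows "2 * infsum (\<lambda>u. right_jump f u * (right_cont_part f t - right_cont_part f u)) {0..<t}
      + 2 * infsum (\<lambda>s. right_lim f s * (right_lim f s - f s)) {0..<t}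
    = 2 * right_cont_part f t * jump_part f t + (jump_part f t)\<^sup>2 + infsum (\<lambda>u. (right_jump f u)\<^sup>2) {0..<t}"
proof -
  define g where "g = right_cont_part f"
  define J where "J = jump_part f"
  define d where "d = right_jump f"
  let ?S = "{0..<t}"
  note sums = right_jump_products_summable[OF assms, folded g_def d_def]
  have rl_eq: "right_lim f s = g s + J s + d s" for s
    unfolding g_def J_def d_def right_cont_part_eq right_jump_def by simp
  have J_eq: "J x = infsum d {0..<x}" for x unfolding J_def d_def jump_part_def ..
  have dS: "d summable_on ?S" unfolding d_def by (rule right_jump_summable[OF f order_refl])
  define Q where "Q u = d u * (2 * J u + d u)" for u
  have Q_eq: "d u * (2 * infsum d {v\<in>?S. v < u} + d u) = Q u" if "u \<in> ?S" for u
  proof -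
    have "{v\<in>?S. v < u} = {0..<u}" using that by auto
    then show ?thesis unfolding Q_def J_eq by simp
  qed
  have Q: "Q summable_on ?S" "(J t)\<^sup>2 = infsum Q ?S"
    using square_infsum_ordered[OF dS] summable_on_cong[of ?S _ Q, OF Q_eq]
      infsum_cong[of ?S _ Q, OF Q_eq] J_eq[of t]
    by simp_all
  have "2 * infsum (\<lambda>u. d u * (g t - g u)) ?S + 2 * infsum (\<lambda>s. right_lim f s * (right_lim f s - f s)) ?S
      = infsum (\<lambda>u. 2 * (d u * (g t - g u)) + 2 * (d u * right_lim f u)) ?S"
    using sums(1,2)
    by (simp add: infsum_add infsum_cmult_right summable_on_cmult_right d_def right_jump_def mult.commute)
  also have "\<dots> = infsum (\<lambda>u. 2 * g t * d u + Q u + d u * d u) ?S"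
    by (intro infsum_cong) (simp add: Q_def rl_eq algebra_simps)
  also have "\<dots> = 2 * g t * J t + (J t)\<^sup>2 + infsum (\<lambda>u. d u * d u) ?S"
    using summable_on_cmult_right[OF dS, of "2 * g t"] Q sums(3) unfolding J_eq[of t]
    by (simp add: infsum_add summable_on_add infsum_cmult_right')
  finally show ?thesis unfolding g_def J_def d_def by (simp add: power2_eq_square)
qed

lemma square_le_stieltjes_Ioc:
  assumes f: "regulated_path f" "bv_path f" and "t > 0"
  shows "(f t)\<^sup>2 \<le> (f 0)\<^sup>2 + stieltjes_Ioc (right_cont_part f) (\<lambda>s. f s + right_lim f s) 0 t
           + 2 * infsum (\<lambda>s. right_lim f s * (right_lim f s - f s)) {0..<t}
           - infsum (\<lambda>s. (right_lim f s - f s) * (f s - left_lim f s)) {0<..t}"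
proof -
  have "f t = right_cont_part f t + jump_part f t" "f 0 = right_cont_part f 0"
    unfolding right_cont_part_eq jump_part_def by simp_all
  moreover have "0 \<le> infsum (\<lambda>s. (f s - left_lim f s)\<^sup>2) {0<..t}"
    "0 \<le> infsum (\<lambda>u. (right_jump f u)\<^sup>2) {0..<t}"
    by (auto intro: infsum_nonneg)
  ultimately show ?thesis
    using stieltjes_Ioc_self_plus_right_lim[OF assms] right_jump_sums_eq[OF f less_imp_le[OF \<open>t > 0\<close>]]
    unfolding right_jump_def by (simp add: power2_eq_square algebra_simps)
qed

theorem proposition6:
  fixes A :: "'w \<Rightarrow> real \<Rightarrow> real" and \<omega> :: 'w and t :: real
  assumes "\<forall>\<omega>. regulated_path (A \<omega>)"
    and "\<forall>\<omega>. bv_path (A \<omega>)"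
    and "t \<ge> 0"
  shows "(A \<omega> t)\<^sup>2 \<le> (A \<omega> 0)\<^sup>2
           + stieltjes_Ioc (right_cont_part (A \<omega>)) (\<lambda>s. A \<omega> s + right_lim (A \<omega>) s) 0 t
           + 2 * infsum (\<lambda>s. right_lim (A \<omega>) s * (right_lim (A \<omega>) s - A \<omega> s)) {0..<t}
           - infsum (\<lambda>s. (right_lim (A \<omega>) s - A \<omega> s) * (A \<omega> s - left_lim (A \<omega>) s)) {0<..t}"
proof (cases "t = 0")
  case True
  then show ?thesis unfolding stieltjes_Ioc_def Let_def set_lebesgue_integral_def by simp
next
  case False
  then show ?thesis
    using square_le_stieltjes_Ioc[of "A \<omega>" t] assms by simp
qed

end
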